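(* Assume the Smoothness Assumption (see context), and let $\{x^k_\tau,y^k_\tau,z^k_\tau\}$ be generated by Algorithm 1 with $T=M$, $r\ge\max\{2\rho,L_y+\rho\}$, and $$\frac{24(L_y+1)}{(r-\rho)^2}\le\alpha_x\le\min\Big\{\frac1{12(r+L_x+2L_y)},\frac{(r-\rho)^2}{24(r+L_x)^2(L_y+1)},\frac{r-(\rho+2L_y)}{2L_y(L_x+r)}\Big\}.$$ Then, with output $(\tilde x,\tilde y)$, $$\begin{aligned}\mathbb E\|\nabla_zd_r(\tilde y,\tilde x)\|^2\le{}&\frac1{KT}\Big(15r^2+\frac{97}{\alpha_x^2}\Big)\sum_{k=0}^{K-1}\sum_{\tau=0}^{T-1}\mathbb E\|x^k_{\tau+1}-x^k_\tau\|^2+\frac{35r^2}{KT}\sum_{k=0}^{K-1}\sum_{\tau=0}^{T-1}\mathbb E\|y^k_\tau-y^k_{\tau+1}\|^2\\&+\frac{12r^2}{KT}\sum_{k=0}^{K-1}\sum_{\tau=0}^{T-1}\mathbb E\|x^k_{\tau+1}-z^k_\tau\|^2+61C_{\sigma,x},\end{aligned}$$ where $\nabla_zd_r(\tilde y,\tilde x)$ is the gradient of $z\mapsto d_r(\tilde y,z)$ at $z=\tilde x$, and $C_{\sigma,x}=0$ in the finite-sum setting, $C_{\sigma,x}=\sigma_x^2/B$ in the online setting.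
   Context: Problem. Let $\mathcal X\subseteq\mathbb R^{d_x}$, $\mathcal Y\subseteq\mathbb R^{d_y}$ be nonempty closed convex sets, $\mathbb P$ a distribution on $\Xi$, $f:\mathbb R^{d_x}\times\mathbb R^{d_y}\times\Xi\to\mathbb R$, $F(x,y)=\mathbb E_{\xi\sim\mathbb P}[f(x,y;\xi)]$ (finite-sum setting: empirical distribution of $N$ samples; online setting: i.i.d. sampling). Smoothness Assumption: (i) $\mathcal Y$ compact with diameter $D_{\mathcal Y}$; (ii) $\mathbb E|f(x_1,y_1;\xi)-f(x_2,y_2;\xi)|\le\ell(\|x_1-x_2\|+\|y_1-y_2\|)$ on $\mathcal X\times\mathcal Y$; (iii) for all $x,x_i\in\mathcal X$, $y,y_i\in\mathcal Y$: $\mathbb E\|\nabla_xf(x_1,y;\xi)-\nabla_xf(x_2,y;\xi)\|^2\le L_x^2\|x_1-x_2\|^2$, $\mathbb E\|\nabla_xf(x,y_1;\xi)-\nabla_xf(x,y_2;\xi)\|^2\le L_y^2\|y_1-y_2\|^2$, $\mathbb E\|\nabla_yf(x_1,y_1;\xi)-\nabla_yf(x_2,y_2;\xi)\|^2\le L_y^2(\|x_1-x_2\|^2+\|y_1-y_2\|^2)$; (iv) $F(\cdot,y)+\frac\rho2\|\cdot\|^2$ convex on $\mathcal X$ for each $y$; (v) $\mathbb E[\nabla f(x,y;\xi)\mid(x,y)]=\nabla F(x,y)$, $\mathbb E\|\nabla_xf-\nabla_xF\|^2\le\sigma_x^2$, $\mathbb E\|\nabla_yf-\nabla_yF\|^2\le\sigma_y^2$;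 (vi) $\max_y\min_xF\ge\underline F$. Notation: $F_r(x,y,z)=F(x,y)+\frac r2\|x-z\|^2$, $d_r(y,z)=\min_{x\in\mathcal X}F_r(x,y,z)$. Algorithm 1: Input $(x^0_0,y^0_0,z^0_0)$, positive integers $K,T,M,B$, parameters $\alpha_x,\alpha_y,\beta,r>0$. For $k=0,\dots,K-1$, $\tau=0,\dots,T-1$: if $\tau=0$, $G^k_{x,0}=\frac1B\sum_{i=1}^B\nabla_xf(x^k_0,y^k_0;\xi^k_{0,i})$, $G^k_{y,0}$ analogously, with $B$ i.i.d. samples (online) or all $N$ samples, $B=N$ (finite-sum); if $\tau\ge1$, with $M$ fresh i.i.d. samples, $G^k_{x,\tau}=\frac1M\sum_{i=1}^M[\nabla_xf(x^k_\tau,y^k_\tau;\xi^k_{\tau,i})-\nabla_xf(x^k_{\tau-1},y^k_{\tau-1};\xi^k_{\tau,i})]+G^k_{x,\tau-1}$, $G^k_{y,\tau}$ analogously. Update $x^k_{\tau+1}=\mathrm{proj}_{\mathcal X}(x^k_\tau-\alpha_x[G^k_{x,\tau}+r(x^k_\tau-z^k_\tau)])$, $y^k_{\tau+1}=\mathrm{proj}_{\mathcal Y}(y^k_\tau+\alpha_yG^k_{y,\tau})$, $z^k_{\tau+1}=z^k_\tau+\beta(x^k_{\tau+1}-z^k_\tau)$; $(x^{k+1}_0,y^{k+1}_0,z^{k+1}_0)=(x^k_T,y^k_T,z^k_T)$. Output $(\tilde x,\tilde y)$ uniformly at random from $\{(x^k_{\tau+1},y^k_{\tau+1})\}$. *)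

theory Defs
  imports "HOL-Probability.Probability"
begin

text \<open>The two sampling settings: online (initial batch of B i.i.d. samples) and
  finite-sum (P is the empirical distribution of the list of N samples; the
  initial estimator uses all N samples).\<close>
datatype 'xi setting = Online nat | FiniteSum "'xi list"

definition Fexp :: "'xi measure \<Rightarrow> ('x \<Rightarrow> 'y \<Rightarrow> 'xi \<Rightarrow> real) \<Rightarrow> 'x \<Rightarrow> 'y \<Rightarrow> real" where
  "Fexp P f x y = (\<integral>\<xi>. f x y \<xi> \<partial>P)"

definition d_r :: "'x::real_normed_vector set \<Rightarrow> 'xi measure \<Rightarrow> ('x \<Rightarrow> 'y \<Rightarrow> 'xi \<Rightarrow> real)
    \<Rightarrow> real \<Rightarrow> 'y \<Rightarrow> 'x \<Rightarrow> real" where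
  "d_r X P f r y z = (INF x\<in>X. Fexp P f x y + r / 2 * (norm (x - z))\<^sup>2)"

definition grad :: "('a::real_inner \<Rightarrow> real) \<Rightarrow> 'a \<Rightarrow> 'a" where
  "grad g z = (THE v. (g has_derivative (\<lambda>h. v \<bullet> h)) (at z))"

definition init_est :: "'xi setting \<Rightarrow> ('x \<Rightarrow> 'y \<Rightarrow> 'xi \<Rightarrow> 'v::real_vector) \<Rightarrow> (nat \<Rightarrow> 'xi)
    \<Rightarrow> 'x \<Rightarrow> 'y \<Rightarrow> 'v" where
  "init_est s g smp x y = (case s of
      Online B \<Rightarrow> (1 / real B) *\<^sub>R (\<Sum>i<B. g x y (smp i))
    | FiniteSum ss \<Rightarrow> (1 / real (length ss)) *\<^sub>R sum_list (map (g x y) ss))"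

text \<open>Algorithm 1, flattened: the state at global step n = k*T + tau (tau < T) is
  (x^k_tau, y^k_tau, z^k_tau, G^k_{x,tau}, G^k_{y,tau}); since
  (x^{k+1}_0,y^{k+1}_0,z^{k+1}_0) = (x^k_T,y^k_T,z^k_T), the positions at step k*T+T
  are also x^k_T etc.  smp k tau i is the sample xi^k_{tau,i}.\<close>
primrec alg :: "'x::euclidean_space set \<Rightarrow> 'y::euclidean_space set \<Rightarrow> ('x \<Rightarrow> 'y \<Rightarrow> 'xi \<Rightarrow> 'x)
    \<Rightarrow> ('x \<Rightarrow> 'y \<Rightarrow> 'xi \<Rightarrow> 'y) \<Rightarrow> 'xi setting \<Rightarrow> (nat \<Rightarrow> nat \<Rightarrow> nat \<Rightarrow> 'xi)
    \<Rightarrow> nat \<Rightarrow> nat \<Rightarrow> real \<Rightarrow> real \<Rightarrow> real \<Rightarrow> real \<Rightarrow> 'x \<Rightarrow> 'y \<Rightarrow> 'x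
    \<Rightarrow> nat \<Rightarrow> 'x \<times> 'y \<times> 'x \<times> 'x \<times> 'y" where
  "alg X Y gx gy s smp T M ax ay b r x0 y0 z0 0 =
     (x0, y0, z0, init_est s gx (smp 0 0) x0 y0, init_est s gy (smp 0 0) x0 y0)"
| "alg X Y gx gy s smp T M ax ay b r x0 y0 z0 (Suc n) =
     (case alg X Y gx gy s smp T M ax ay b r x0 y0 z0 n of (x, y, z, Gx, Gy) \<Rightarrow>
       (let x' = closest_point X (x - ax *\<^sub>R (Gx + r *\<^sub>R (x - z)));
            y' = closest_point Y (y + ay *\<^sub>R Gy);
            z' = z + b *\<^sub>R (x' - z);
            k = Suc n div T;
            \<tau> = Suc n mod T
        in if \<tau> = 0
           then (x', y', z', init_est s gx (smp k 0) x' y', init_est s gy (smp k 0) x' y')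
           else (x', y', z',
                 (1 / real M) *\<^sub>R (\<Sum>i<M. gx x' y' (smp k \<tau> i) - gx x y (smp k \<tau> i)) + Gx,
                 (1 / real M) *\<^sub>R (\<Sum>i<M. gy x' y' (smp k \<tau> i) - gy x y (smp k \<tau> i)) + Gy)))"

end

theory Submission
  imports Defs
begin

text \<open>
  The gradient of the envelope \<open>z \<mapsto> d\<^sub>r(y, z)\<close> is \<open>r (z - p)\<close>, where \<open>p\<close> is the unique minimiser
  of the \<open>(r - \<rho>)\<close>-strongly convex function \<open>F\<^sub>r(\<cdot>, y, z)\<close>.  Taking \<open>z = x\<^sup>k\<^sub>\<tau>\<^sub>+\<^sub>1\<close>, the optimality
  condition at \<open>p\<close>, the variational inequality of the projection producing \<open>x\<^sup>k\<^sub>\<tau>\<^sub>+\<^sub>1\<close> and the weak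
  monotonicity of \<open>\<nabla>\<^sub>xF\<close> bound \<open>\<parallel>\<nabla>\<^sub>zd\<^sub>r\<parallel>\<^sup>2\<close> pointwise by the squared moves of \<open>x\<close> and \<open>y\<close>, the gap
  \<open>\<parallel>x\<^sup>k\<^sub>\<tau>\<^sub>+\<^sub>1 - z\<^sup>k\<^sub>\<tau>\<parallel>\<^sup>2\<close> and the squared error of the estimator \<open>G\<^sup>k\<^sub>x\<^sub>,\<^sub>\<tau>\<close>.

  The mean squared estimator error is at most \<open>\<sigma>\<^sub>x\<^sup>2/B\<close> (zero for the full gradient) at the start
  of an epoch, and every recursive update adds at most \<open>(2L\<^sub>x\<^sup>2\<parallel>\<Delta>x\<parallel>\<^sup>2 + 2L\<^sub>y\<^sup>2\<parallel>\<Delta>y\<parallel>\<^sup>2)/M\<close> to it: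
  the fresh mini-batch is independent of the past, so the new increment is centred given the
  past and its variance is divided by \<open>M\<close>.  With \<open>T = M\<close> an epoch sum of these errors costs
  one extra copy of the squared moves, and the step-size restrictions turn the constants into
  those of the statement.
\<close>

section \<open>Sample means of independent samples\<close>

context prob_space
begin

lemma integrable_norm_sq_if_nn_integral_finite:
  fixes h :: "'a \<Rightarrow> 'v::euclidean_space"
  assumes "integrable M h" and "(\<integral>\<^sup>+s. ennreal ((norm (h s))\<^sup>2) \<partial>M) < \<infinity>"
  shows "integrable M (\<lambda>s. (norm (h s))\<^sup>2)"
  using assms unfolding integrable_iff_bounded by auto

lemma nn_integral_norm_sq_add_centered:
  fixes v :: "'a \<Rightarrow> 'v::euclidean_space"
  assumes v: "integrable M v" "integrable M (\<lambda>s. (norm (v s))\<^sup>2)" "(\<integral>s. v s \<partial>M) = 0"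
  shows "(\<integral>\<^sup>+s. ennreal ((norm (C + a *\<^sub>R v s))\<^sup>2) \<partial>M)
           = ennreal ((norm C)\<^sup>2 + a\<^sup>2 * (\<integral>s. (norm (v s))\<^sup>2 \<partial>M))"
proof -
  have expand: "(norm (C + a *\<^sub>R v s))\<^sup>2 = (norm C)\<^sup>2 + 2 * a * (C \<bullet> v s) + a\<^sup>2 * (norm (v s))\<^sup>2" for s
    unfolding power2_norm_eq_inner
    by (simp add: inner_add_left inner_add_right power2_eq_square algebra_simps inner_commute)
  have int_cross: "integrable M (\<lambda>s. 2 * a * (C \<bullet> v s))"
    using v by (intro integrable_mult_right) auto
  have int_sq: "integrable M (\<lambda>s. a\<^sup>2 * (norm (v s))\<^sup>2)"
    using v(2) by (rule integrable_mult_right)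
  have int: "integrable M (\<lambda>s. (norm (C + a *\<^sub>R v s))\<^sup>2)"
    unfolding expand using int_cross int_sq by (intro Bochner_Integration.integrable_add) auto
  have "(\<integral>s. (norm (C + a *\<^sub>R v s))\<^sup>2 \<partial>M) = (norm C)\<^sup>2 + a\<^sup>2 * (\<integral>s. (norm (v s))\<^sup>2 \<partial>M)"
    unfolding expand using int_cross int_sq v by (simp add: prob_space)
  with int show ?thesis by (simp add: nn_integral_eq_integral)
qed

lemma nn_integral_norm_sq_add_sum_iid:
  fixes v :: "'a \<Rightarrow> 'v::euclidean_space"
  assumes v: "integrable M v" "integrable M (\<lambda>s. (norm (v s))\<^sup>2)" "(\<integral>s. v s \<partial>M) = 0"
    and "finite J"
  shows "(\<integral>\<^sup>+t. ennreal ((norm (C + a *\<^sub>R (\<Sum>j\<in>J. v (t j))))\<^sup>2) \<partial>PiM J (\<lambda>_. M))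
         = ennreal ((norm C)\<^sup>2 + a\<^sup>2 * card J * (\<integral>s. (norm (v s))\<^sup>2 \<partial>M))"
  using \<open>finite J\<close>
proof (induction J arbitrary: C rule: finite_induct)
  case empty
  interpret P0: prob_space "PiM {} (\<lambda>_. M)" by (rule prob_space_PiM) (rule prob_space_axioms)
  show ?case by (simp add: P0.emeasure_space_1)
next
  case (insert i J)
  interpret PM: product_prob_space "\<lambda>_. M" by unfold_locales
  interpret PJ: prob_space "PiM J (\<lambda>_. M)" by (rule prob_space_PiM) (rule prob_space_axioms)
  have [measurable]: "v \<in> borel_measurable M" using v by auto
  define V where "V = (\<integral>s. (norm (v s))\<^sup>2 \<partial>M)"
  have V: "0 \<le> V" by (simp add: V_def)
  have "(\<integral>\<^sup>+t. ennreal ((norm (C + a *\<^sub>R (\<Sum>j\<in>insert i J. v (t j))))\<^sup>2) \<partial>PiM (insert i J) (\<lambda>_. M))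
    = (\<integral>\<^sup>+x. (\<integral>\<^sup>+y. ennreal ((norm (C + a *\<^sub>R (\<Sum>j\<in>insert i J. v ((x(i:=y)) j))))\<^sup>2) \<partial>M) \<partial>PiM J (\<lambda>_. M))"
    by (rule PM.product_nn_integral_insert) (use insert in auto)
  also have "\<dots> = (\<integral>\<^sup>+x. ennreal ((norm (C + a *\<^sub>R (\<Sum>j\<in>J. v (x j))))\<^sup>2) + ennreal (a\<^sup>2 * V) \<partial>PiM J (\<lambda>_. M))"
  proof (rule nn_integral_cong)
    fix x
    have "(\<Sum>j\<in>insert i J. v ((x(i:=y)) j)) = v y + (\<Sum>j\<in>J. v (x j))" for y
      using insert by (auto intro!: sum.cong)
    then have split: "C + a *\<^sub>R (\<Sum>j\<in>insert i J. v ((x(i:=y)) j)) = (C + a *\<^sub>R (\<Sum>j\<in>J. v (x j))) + a *\<^sub>R v y" for y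
      by (simp add: algebra_simps)
    show "(\<integral>\<^sup>+y. ennreal ((norm (C + a *\<^sub>R (\<Sum>j\<in>insert i J. v ((x(i:=y)) j))))\<^sup>2) \<partial>M)
       = ennreal ((norm (C + a *\<^sub>R (\<Sum>j\<in>J. v (x j))))\<^sup>2) + ennreal (a\<^sup>2 * V)"
      unfolding split nn_integral_norm_sq_add_centered[OF v] using V by (simp add: V_def ennreal_plus)
  qed
  also have "\<dots> = ennreal ((norm C)\<^sup>2 + a\<^sup>2 * card J * V) + ennreal (a\<^sup>2 * V)"
  proof -
    have "(\<lambda>x. ennreal ((norm (C + a *\<^sub>R (\<Sum>j\<in>J. v (x j))))\<^sup>2)) \<in> borel_measurable (PiM J (\<lambda>_. M))"
      by measurable
    from nn_integral_add[OF this, of "\<lambda>_. ennreal (a\<^sup>2 * V)"] show ?thesis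
      using insert.IH[of C] by (simp add: PJ.emeasure_space_1 V_def)
  qed
  also have "\<dots> = ennreal ((norm C)\<^sup>2 + a\<^sup>2 * card J * V + a\<^sup>2 * V)"
    by (rule ennreal_plus[symmetric]) (use V in auto)
  also have "(norm C)\<^sup>2 + a\<^sup>2 * card J * V + a\<^sup>2 * V = (norm C)\<^sup>2 + a\<^sup>2 * card (insert i J) * V"
    using insert by (simp add: algebra_simps)
  finally show ?case by (simp only: V_def)
qed

lemma integral_norm_sq_centered:
  fixes h :: "'a \<Rightarrow> 'v::euclidean_space"
  assumes h: "integrable M h" and h2: "integrable M (\<lambda>s. (norm (h s))\<^sup>2)"
  shows "integrable M (\<lambda>s. (norm (h s - (\<integral>s. h s \<partial>M)))\<^sup>2)"
    and "(\<integral>s. (norm (h s - (\<integral>s. h s \<partial>M)))\<^sup>2 \<partial>M) = (\<integral>s. (norm (h s))\<^sup>2 \<partial>M) - (norm (\<integral>s. h s \<partial>M))\<^sup>2"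
proof -
  define m where "m = (\<integral>s. h s \<partial>M)"
  have expand: "(norm (h s - m))\<^sup>2 = (norm (h s))\<^sup>2 + (- 2 * (h s \<bullet> m) + (norm m)\<^sup>2)" for s
    unfolding power2_norm_eq_inner by (simp add: inner_diff_left inner_diff_right inner_commute algebra_simps)
  have int_rest: "integrable M (\<lambda>s. - 2 * (h s \<bullet> m) + (norm m)\<^sup>2)"
    using h by (intro Bochner_Integration.integrable_add integrable_mult_right) auto
  show "integrable M (\<lambda>s. (norm (h s - (\<integral>s. h s \<partial>M)))\<^sup>2)"
    unfolding m_def[symmetric] expand using h2 int_rest by (rule Bochner_Integration.integrable_add)
  have "(\<integral>s. - 2 * (h s \<bullet> m) + (norm m)\<^sup>2 \<partial>M) = - (norm m)\<^sup>2"
    using h by (simp add: prob_space m_def power2_norm_eq_inner)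
  then show "(\<integral>s. (norm (h s - (\<integral>s. h s \<partial>M)))\<^sup>2 \<partial>M) = (\<integral>s. (norm (h s))\<^sup>2 \<partial>M) - (norm (\<integral>s. h s \<partial>M))\<^sup>2"
    unfolding m_def[symmetric] expand using h2 int_rest by simp
qed

lemma norm_integral_sq_le_nn_integral:
  fixes h :: "'a \<Rightarrow> 'v::euclidean_space"
  assumes h: "integrable M h"
  shows "ennreal ((norm (\<integral>s. h s \<partial>M))\<^sup>2) \<le> (\<integral>\<^sup>+s. ennreal ((norm (h s))\<^sup>2) \<partial>M)"
proof (cases "(\<integral>\<^sup>+s. ennreal ((norm (h s))\<^sup>2) \<partial>M) < \<infinity>")
  case True
  have h2: "integrable M (\<lambda>s. (norm (h s))\<^sup>2)"
    by (rule integrable_norm_sq_if_nn_integral_finite[OF h True])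
  have "0 \<le> (\<integral>s. (norm (h s - (\<integral>s. h s \<partial>M)))\<^sup>2 \<partial>M)" by simp
  then have "(norm (\<integral>s. h s \<partial>M))\<^sup>2 \<le> (\<integral>s. (norm (h s))\<^sup>2 \<partial>M)"
    using integral_norm_sq_centered(2)[OF h h2] by linarith
  with h2 show ?thesis by (simp add: nn_integral_eq_integral)
qed (simp add: top_unique not_less)

lemma norm_integral_diff_le_if_nn_integral_sq_le:
  fixes g h :: "'a \<Rightarrow> 'v::euclidean_space"
  assumes "integrable M g" "integrable M h" "0 \<le> L" "0 \<le> d"
    and "(\<integral>\<^sup>+s. ennreal ((norm (g s - h s))\<^sup>2) \<partial>M) \<le> ennreal (L\<^sup>2 * d\<^sup>2)"
  shows "norm ((\<integral>s. g s \<partial>M) - (\<integral>s. h s \<partial>M)) \<le> L * d"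
proof -
  have "(\<integral>s. g s \<partial>M) - (\<integral>s. h s \<partial>M) = (\<integral>s. g s - h s \<partial>M)"
    using assms(1,2) by (rule Bochner_Integration.integral_diff[symmetric])
  then have "ennreal ((norm ((\<integral>s. g s \<partial>M) - (\<integral>s. h s \<partial>M)))\<^sup>2) \<le> (\<integral>\<^sup>+s. ennreal ((norm (g s - h s))\<^sup>2) \<partial>M)"
    using norm_integral_sq_le_nn_integral[of "\<lambda>s. g s - h s"] assms(1,2) by simp
  also have "\<dots> \<le> ennreal ((L * d)\<^sup>2)"
    using assms(5) by (simp add: power_mult_distrib)
  finally have "(norm ((\<integral>s. g s \<partial>M) - (\<integral>s. h s \<partial>M)))\<^sup>2 \<le> (L * d)\<^sup>2"
    by (subst (asm) ennreal_le_iff) auto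
  then show ?thesis by (rule power2_le_imp_le) (simp add: assms)
qed

lemma nn_integral_norm_sq_add_sample_mean:
  fixes h :: "'a \<Rightarrow> 'v::euclidean_space"
  assumes h: "integrable M h" "integrable M (\<lambda>s. (norm (h s - (\<integral>s. h s \<partial>M)))\<^sup>2)"
    and J: "finite J" "card J = n" "1 \<le> n"
  shows "(\<integral>\<^sup>+t. ennreal ((norm (C + (1 / real n) *\<^sub>R (\<Sum>j\<in>J. h (t j) - (\<integral>s. h s \<partial>M))))\<^sup>2) \<partial>PiM J (\<lambda>_. M))
         = ennreal ((norm C)\<^sup>2 + (1 / real n) * (\<integral>s. (norm (h s - (\<integral>s. h s \<partial>M)))\<^sup>2 \<partial>M))"
proof -
  have "(1 / real n)\<^sup>2 * real (card J) = 1 / real n" using J by (simp add: power2_eq_square)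
  with J h show ?thesis
    using nn_integral_norm_sq_add_sum_iid[of "\<lambda>s. h s - (\<integral>s. h s \<partial>M)" J C "1 / real n"]
    by (simp add: prob_space)
qed

lemma distr_restrict_indep_vars:
  assumes indep: "indep_vars (\<lambda>_. N) Z I" and distr: "\<And>i. i \<in> I \<Longrightarrow> distr M N (Z i) = N"
    and B: "B \<subseteq> I" "B \<noteq> {}"
  shows "distr M (PiM B (\<lambda>_. N)) (\<lambda>\<omega>. restrict (\<lambda>i. Z i \<omega>) B) = PiM B (\<lambda>_. N)"
proof -
  have Z: "\<And>i. i \<in> B \<Longrightarrow> random_variable N (Z i)"
    using indep B unfolding indep_vars_def by auto
  have "distr M (PiM B (\<lambda>_. N)) (\<lambda>\<omega>. restrict (\<lambda>i. Z i \<omega>) B) = PiM B (\<lambda>i. distr M N (Z i))"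
    using indep_vars_iff_distr_eq_PiM'[of B Z "\<lambda>_. N", OF B(2) Z] indep_vars_subset[OF indep B(1)] by simp
  also have "\<dots> = PiM B (\<lambda>_. N)"
    using B distr by (intro PiM_cong) auto
  finally show ?thesis .
qed

lemma nn_integral_indep_vars_split:
  assumes indep: "indep_vars (\<lambda>_. N) Z I" and distr: "\<And>i. i \<in> I \<Longrightarrow> distr M N (Z i) = N"
    and N: "prob_space N"
    and AB: "A \<inter> B = {}" "A \<subseteq> I" "B \<subseteq> I" "B \<noteq> {}"
    and Phi[measurable]: "Phi \<in> borel_measurable (PiM A (\<lambda>_. N) \<Otimes>\<^sub>M PiM B (\<lambda>_. N))"
  shows "(\<integral>\<^sup>+\<omega>. Phi (restrict (\<lambda>i. Z i \<omega>) A, restrict (\<lambda>i. Z i \<omega>) B) \<partial>M)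
       = (\<integral>\<^sup>+\<omega>. (\<integral>\<^sup>+t. Phi (restrict (\<lambda>i. Z i \<omega>) A, t) \<partial>PiM B (\<lambda>_. N)) \<partial>M)"
proof -
  interpret PB: prob_space "PiM B (\<lambda>_. N)" by (rule prob_space_PiM) (rule N)
  let ?rA = "\<lambda>\<omega>. restrict (\<lambda>i. Z i \<omega>) A"
  let ?rB = "\<lambda>\<omega>. restrict (\<lambda>i. Z i \<omega>) B"
  let ?DA = "distr M (PiM A (\<lambda>_. N)) ?rA"
  have Z[measurable]: "\<And>i. i \<in> I \<Longrightarrow> Z i \<in> measurable M N"
    using indep unfolding indep_vars_def by auto
  have rA[measurable]: "?rA \<in> measurable M (PiM A (\<lambda>_. N))"
    using AB by (intro measurable_restrict) auto
  have rB[measurable]: "?rB \<in> measurable M (PiM B (\<lambda>_. N))"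
    using AB by (intro measurable_restrict) auto
  have "indep_var (PiM A (\<lambda>_. N)) ?rA (PiM B (\<lambda>_. N)) ?rB"
    using indep_vars_subset[OF indep] AB by (intro indep_var_restrict) auto
  then have joint: "?DA \<Otimes>\<^sub>M distr M (PiM B (\<lambda>_. N)) ?rB
      = distr M (PiM A (\<lambda>_. N) \<Otimes>\<^sub>M PiM B (\<lambda>_. N)) (\<lambda>\<omega>. (?rA \<omega>, ?rB \<omega>))"
    using indep_var_distribution_eq by blast
  have distr_B: "distr M (PiM B (\<lambda>_. N)) ?rB = PiM B (\<lambda>_. N)"
    using distr_restrict_indep_vars[OF indep distr AB(3,4)] by simp
  have "sets (?DA \<Otimes>\<^sub>M PiM B (\<lambda>_. N)) = sets (PiM A (\<lambda>_. N) \<Otimes>\<^sub>M PiM B (\<lambda>_. N))"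
    by (intro sets_pair_measure_cong) auto
  then have Phi': "Phi \<in> borel_measurable (?DA \<Otimes>\<^sub>M PiM B (\<lambda>_. N))"
    using Phi measurable_cong_sets by blast
  have "(\<integral>\<^sup>+\<omega>. Phi (?rA \<omega>, ?rB \<omega>) \<partial>M)
      = (\<integral>\<^sup>+p. Phi p \<partial>distr M (PiM A (\<lambda>_. N) \<Otimes>\<^sub>M PiM B (\<lambda>_. N)) (\<lambda>\<omega>. (?rA \<omega>, ?rB \<omega>)))"
    by (subst nn_integral_distr) auto
  also have "\<dots> = (\<integral>\<^sup>+p. Phi p \<partial>(?DA \<Otimes>\<^sub>M PiM B (\<lambda>_. N)))"
    unfolding joint[symmetric] distr_B ..
  also have "\<dots> = (\<integral>\<^sup>+a. (\<integral>\<^sup>+t. Phi (a, t) \<partial>PiM B (\<lambda>_. N)) \<partial>?DA)"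
    by (rule PB.nn_integral_fst[symmetric, OF Phi'])
  also have "\<dots> = (\<integral>\<^sup>+\<omega>. (\<integral>\<^sup>+t. Phi (?rA \<omega>, t) \<partial>PiM B (\<lambda>_. N)) \<partial>M)"
  proof -
    have "(\<lambda>a. \<integral>\<^sup>+t. Phi (a, t) \<partial>PiM B (\<lambda>_. N)) \<in> borel_measurable (PiM A (\<lambda>_. N))"
      by (rule PB.borel_measurable_nn_integral_fst[OF Phi])
    then have "(\<lambda>a. \<integral>\<^sup>+t. Phi (a, t) \<partial>PiM B (\<lambda>_. N)) \<in> borel_measurable ?DA" by simp
    from nn_integral_distr[OF rA this] show ?thesis by simp
  qed
  finally show ?thesis .
qed

end

lemma sq_sum4_le:
  fixes a b c d :: real
  shows "4 * (a + b + c + d)\<^sup>2 \<le> 12 * b\<^sup>2 + 18 * (a\<^sup>2 + c\<^sup>2 + d\<^sup>2)"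
proof -
  have "12 * b\<^sup>2 + 18 * (a\<^sup>2 + c\<^sup>2 + d\<^sup>2) - 4 * (a + b + c + d)\<^sup>2
        = 8 * (b - (a + c + d) / 2)\<^sup>2 + 6 * ((a - c)\<^sup>2 + (a - d)\<^sup>2 + (c - d)\<^sup>2)"
    by (simp add: power2_eq_square algebra_simps)
  moreover have "0 \<le> 8 * (b - (a + c + d) / 2)\<^sup>2 + 6 * ((a - c)\<^sup>2 + (a - d)\<^sup>2 + (c - d)\<^sup>2)" by simp
  ultimately show ?thesis by linarith
qed

lemma sample_mean_minus:
  fixes g :: "nat \<Rightarrow> 'v::real_vector"
  assumes "1 \<le> n"
  shows "(1 / real n) *\<^sub>R (\<Sum>i<n. g i) - \<mu> = (1 / real n) *\<^sub>R (\<Sum>i<n. g i - \<mu>)"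
proof -
  have "(\<Sum>i<n. g i - \<mu>) = (\<Sum>i<n. g i) - real n *\<^sub>R \<mu>" by (simp add: sum_subtractf sum_constant_scaleR)
  then show ?thesis using assms by (simp add: scaleR_diff_right)
qed

lemma sum_list_map_eq_sum_count_scaleR:
  fixes g :: "'a \<Rightarrow> 'v::real_vector"
  shows "sum_list (map g xs) = (\<Sum>a\<in>set xs. real (count_list xs a) *\<^sub>R g a)"
proof (induction xs)
  case (Cons x xs)
  show ?case (is "?l = ?r")
  proof cases
    assume "x \<in> set xs"
    have "?l = g x + (\<Sum>a\<in>set xs. real (count_list xs a) *\<^sub>R g a)" by (simp add: Cons.IH)
    also have "set xs = insert x (set xs - {x})" using \<open>x \<in> set xs\<close> by blast
    also have "g x + (\<Sum>a\<in>insert x (set xs - {x}). real (count_list xs a) *\<^sub>R g a) = ?r"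
      by (simp add: sum.insert_remove eq_commute algebra_simps)
    finally show ?thesis .
  next
    assume "x \<notin> set xs"
    hence "\<And>xa. xa \<in> set xs \<Longrightarrow> x \<noteq> xa" by blast
    thus ?thesis by (simp add: Cons.IH \<open>x \<notin> set xs\<close>)
  qed
qed simp

lemma integral_pmf_of_multiset_mset:
  fixes g :: "'a \<Rightarrow> 'v::{banach, second_countable_topology}"
  assumes "ss \<noteq> []"
  shows "(\<integral>z. g z \<partial>measure_pmf (pmf_of_multiset (mset ss))) = (1 / real (length ss)) *\<^sub>R sum_list (map g ss)"
proof -
  have ne: "mset ss \<noteq> {#}" using assms by simp
  have "(\<integral>z. g z \<partial>measure_pmf (pmf_of_multiset (mset ss))) = (\<Sum>a\<in>set ss. pmf (pmf_of_multiset (mset ss)) a *\<^sub>R g a)"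
    by (rule integral_measure_pmf) (use ne in auto)
  also have "\<dots> = (\<Sum>a\<in>set ss. (real (count_list ss a) / real (length ss)) *\<^sub>R g a)"
    using ne by (intro sum.cong) (auto simp: count_mset)
  also have "\<dots> = (1 / real (length ss)) *\<^sub>R (\<Sum>a\<in>set ss. real (count_list ss a) *\<^sub>R g a)"
    by (simp add: scaleR_sum_right)
  finally show ?thesis by (simp add: sum_list_map_eq_sum_count_scaleR)
qed

lemma norm_add_sq_le: "(norm (a + b))\<^sup>2 \<le> 2 * (norm a)\<^sup>2 + 2 * (norm (b::'v::real_normed_vector))\<^sup>2"
proof -
  have "(norm (a + b))\<^sup>2 \<le> (norm a + norm b)\<^sup>2" by (intro power_mono norm_triangle_ineq) auto
  also have "\<dots> \<le> 2 * (norm a)\<^sup>2 + 2 * (norm b)\<^sup>2"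
    using sum_squares_bound[of "norm a" "norm b"] by (simp add: power2_eq_square algebra_simps)
  finally show ?thesis .
qed

lemma ennreal_mult_add_mult:
  "0 \<le> p \<Longrightarrow> 0 \<le> a \<Longrightarrow> 0 \<le> q \<Longrightarrow> 0 \<le> b \<Longrightarrow>
    ennreal (p * a + q * b) = ennreal p * ennreal a + ennreal q * ennreal b"
  by (metis ennreal_plus ennreal_mult mult_nonneg_nonneg)

lemma ennreal_mult_add_numeral_mult_le:
  assumes "0 \<le> a" "0 \<le> p" "a + numeral w * p \<le> c"
  shows "ennreal a * I + numeral w * (ennreal p * I) \<le> ennreal c * I"
proof -
  have "ennreal a * I + numeral w * (ennreal p * I) = ennreal (a + numeral w * p) * I"
    using assms by (simp add: distrib_right ennreal_plus ennreal_mult mult.assoc)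
  also have "\<dots> \<le> ennreal c * I" using assms by (intro mult_right_mono ennreal_leI) auto
  finally show ?thesis .
qed

lemma ennreal_mult_add_mult4:
  assumes "0 \<le> p" "0 \<le> a" "0 \<le> q" "0 \<le> b" "0 \<le> u" "0 \<le> c" "0 \<le> v" "0 \<le> d"
  shows "ennreal (p * a + q * b + u * c + v * d)
           = ennreal p * ennreal a + ennreal q * ennreal b + ennreal u * ennreal c + ennreal v * ennreal d"
proof -
  have "ennreal (p * a + q * b + u * c + v * d) = ennreal (p * a + q * b) + ennreal (u * c) + ennreal (v * d)"
    using assms by (simp add: ennreal_plus)
  then show ?thesis using assms by (simp add: ennreal_mult_add_mult ennreal_mult)
qed

lemma step_size_coefficient_le:
  fixes \<alpha> lx ly r :: real
  assumes "0 < \<alpha>" "0 \<le> lx" "0 \<le> ly" "0 \<le> r" "\<alpha> * (12 * (r + lx + 2 * ly)) \<le> 1"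
  shows "18 * (1 / \<alpha> + lx + r)\<^sup>2 + 18 * (2 * lx\<^sup>2) \<le> 15 * r\<^sup>2 + 97 / \<alpha>\<^sup>2"
proof -
  define q where "q = 1 / \<alpha>"
  have q: "0 < q" using assms by (simp add: q_def)
  have "12 * (r + lx + 2 * ly) \<le> q" using assms by (simp add: q_def field_simps)
  then have small: "lx + r \<le> q / 12" using assms by simp
  have "(q + lx + r)\<^sup>2 \<le> (13 / 12 * q)\<^sup>2" using small assms by (intro power_mono) auto
  moreover have "lx\<^sup>2 \<le> (q / 12)\<^sup>2" using small assms by (intro power_mono) auto
  ultimately have "18 * (q + lx + r)\<^sup>2 + 18 * (2 * lx\<^sup>2) \<le> 97 * q\<^sup>2"
    by (simp add: power2_eq_square) (smt (verit) q mult_pos_pos)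
  moreover have "97 * q\<^sup>2 = 97 / \<alpha>\<^sup>2" by (simp add: q_def power_divide)
  moreover have "0 \<le> 15 * r\<^sup>2" by simp
  ultimately show ?thesis unfolding q_def by linarith
qed

section \<open>First-order conditions within a convex set\<close>

lemma convex_add_scaleR_diff_mem:
  assumes "convex S" "x \<in> S" "w \<in> S" "0 \<le> t" "t \<le> 1"
  shows "x + t *\<^sub>R (w - x) \<in> S"
proof -
  have "x + t *\<^sub>R (w - x) = (1 - t) *\<^sub>R x + t *\<^sub>R w" by (simp add: algebra_simps)
  then show ?thesis using assms convexD_alt[of S x w t] by auto
qed

lemma has_derivative_within_convex_difference_quotient:
  fixes \<phi> :: "'a::real_normed_vector \<Rightarrow> real"
  assumes d: "(\<phi> has_derivative \<phi>') (at x within S)" and S: "convex S" "x \<in> S" "w \<in> S"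
  shows "((\<lambda>t. (\<phi> (x + t *\<^sub>R (w - x)) - \<phi> x) / t) \<longlongrightarrow> \<phi>' (w - x)) (at_right 0)"
proof -
  define \<gamma> where "\<gamma> = (\<lambda>t::real. x + t *\<^sub>R (w - x))"
  have \<gamma>: "(\<gamma> has_derivative (\<lambda>t. t *\<^sub>R (w - x))) (at 0 within {0..1})"
    unfolding \<gamma>_def by (auto intro!: derivative_eq_intros)
  have "\<gamma> ` {0..1} \<subseteq> S"
    using convex_add_scaleR_diff_mem[OF S] by (auto simp: \<gamma>_def)
  then have "(\<phi> has_derivative \<phi>') (at (\<gamma> 0) within (\<gamma> ` {0..1}))"
    using has_derivative_subset[OF d] by (simp add: \<gamma>_def)
  from diff_chain_within[OF \<gamma> this]
  have "((\<phi> \<circ> \<gamma>) has_field_derivative \<phi>' (w - x)) (at 0 within {0..1})"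
    using has_derivative_linear[OF d]
    by (auto intro: has_derivative_imp_has_field_derivative simp: linear_cmul o_def)
  then have "((\<lambda>t. ((\<phi> \<circ> \<gamma>) t - (\<phi> \<circ> \<gamma>) 0) / (t - 0)) \<longlongrightarrow> \<phi>' (w - x)) (at_right 0)"
    unfolding has_field_derivative_iff by (simp add: at_within_Icc_at_right)
  then show ?thesis by (simp add: \<gamma>_def)
qed

lemma has_derivative_within_convex_minimum:
  fixes \<phi> :: "'a::real_normed_vector \<Rightarrow> real"
  assumes d: "(\<phi> has_derivative \<phi>') (at x within S)" and S: "convex S" "x \<in> S" "w \<in> S"
    and min: "\<And>v. v \<in> S \<Longrightarrow> \<phi> x \<le> \<phi> v"
  shows "0 \<le> \<phi>' (w - x)"
proof (rule tendsto_lowerbound[OF has_derivative_within_convex_difference_quotient[OF d S]])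
  have "0 \<le> (\<phi> (x + t *\<^sub>R (w - x)) - \<phi> x) / t" if "0 < t" "t < 1" for t
    using min[OF convex_add_scaleR_diff_mem[OF S]] that by auto
  then show "\<forall>\<^sub>F t in at_right 0. 0 \<le> (\<phi> (x + t *\<^sub>R (w - x)) - \<phi> x) / t"
    by (subst eventually_at_right[of 0 "1::real"]) (auto intro!: exI[of _ 1])
qed simp

lemma convex_on_has_derivative_within_tangent_le:
  fixes \<phi> :: "'a::real_normed_vector \<Rightarrow> real"
  assumes d: "(\<phi> has_derivative \<phi>') (at x within S)" and S: "convex S" "x \<in> S" "w \<in> S"
    and cv: "convex_on S \<phi>"
  shows "\<phi> x + \<phi>' (w - x) \<le> \<phi> w"
proof -
  have "\<phi>' (w - x) \<le> \<phi> w - \<phi> x"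
  proof (rule tendsto_upperbound[OF has_derivative_within_convex_difference_quotient[OF d S]])
    have "(\<phi> (x + t *\<^sub>R (w - x)) - \<phi> x) / t \<le> \<phi> w - \<phi> x" if t: "0 < t" "t < 1" for t
    proof -
      have "x + t *\<^sub>R (w - x) = (1 - t) *\<^sub>R x + t *\<^sub>R w" by (simp add: algebra_simps)
      moreover have "\<phi> ((1 - t) *\<^sub>R x + t *\<^sub>R w) \<le> (1 - t) * \<phi> x + t * \<phi> w"
        using cv S t by (intro convex_onD) auto
      ultimately have "\<phi> (x + t *\<^sub>R (w - x)) - \<phi> x \<le> t * (\<phi> w - \<phi> x)"
        by (simp add: algebra_simps)
      then show ?thesis using t by (simp add: divide_le_eq mult.commute)
    qed
    then show "\<forall>\<^sub>F t in at_right 0. (\<phi> (x + t *\<^sub>R (w - x)) - \<phi> x) / t \<le> \<phi> w - \<phi> x"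
      by (subst eventually_at_right[of 0 "1::real"]) (auto intro!: exI[of _ 1])
  qed simp
  then show ?thesis by simp
qed

section \<open>The proximal point and the gradient of \<open>d\<^sub>r\<close>\<close>

locale weakly_convex_prox =
  fixes X :: "'x::euclidean_space set" and Y :: "'y::euclidean_space set" and P :: "'xi measure"
    and f :: "'x \<Rightarrow> 'y \<Rightarrow> 'xi \<Rightarrow> real" and gx :: "'x \<Rightarrow> 'y \<Rightarrow> 'xi \<Rightarrow> 'x"
    and \<rho> r Lx Ly :: real
  assumes X: "X \<noteq> {}" "closed X" "convex X"
    and P: "prob_space P"
    and unbiased_x: "\<And>x y. x \<in> X \<Longrightarrow> y \<in> Y \<Longrightarrow> integrable P (gx x y) \<and>
        ((\<lambda>x'. Fexp P f x' y) has_derivative (\<lambda>h. (\<integral>z. gx x y z \<partial>P) \<bullet> h)) (at x within X)"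
    and weakly_convex: "\<And>y. y \<in> Y \<Longrightarrow> convex_on X (\<lambda>x. Fexp P f x y + \<rho> / 2 * (norm x)\<^sup>2)"
    and lip_gx_x: "\<And>x1 x2 y. x1 \<in> X \<Longrightarrow> x2 \<in> X \<Longrightarrow> y \<in> Y \<Longrightarrow>
        (\<integral>\<^sup>+z. ennreal ((norm (gx x1 y z - gx x2 y z))\<^sup>2) \<partial>P) \<le> ennreal (Lx\<^sup>2 * (norm (x1 - x2))\<^sup>2)"
    and lip_gx_y: "\<And>x y1 y2. x \<in> X \<Longrightarrow> y1 \<in> Y \<Longrightarrow> y2 \<in> Y \<Longrightarrow>
        (\<integral>\<^sup>+z. ennreal ((norm (gx x y1 z - gx x y2 z))\<^sup>2) \<partial>P) \<le> ennreal (Ly\<^sup>2 * (norm (y1 - y2))\<^sup>2)"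
    and rho: "0 \<le> \<rho>" "\<rho> < r"
    and L_nonneg: "0 \<le> Lx" "0 \<le> Ly"
begin

definition gradF where "gradF x y = (\<integral>z. gx x y z \<partial>P)"

definition Fr where "Fr y z x = Fexp P f x y + r / 2 * (norm (x - z))\<^sup>2"

definition prox where "prox y z = (SOME p. p \<in> X \<and> (\<forall>w\<in>X. Fr y z p \<le> Fr y z w))"

lemma integrable_gx: "x \<in> X \<Longrightarrow> y \<in> Y \<Longrightarrow> integrable P (gx x y)"
  using unbiased_x by blast

lemma has_derivative_Fexp:
  "x \<in> X \<Longrightarrow> y \<in> Y \<Longrightarrow> ((\<lambda>x'. Fexp P f x' y) has_derivative (\<lambda>h. gradF x y \<bullet> h)) (at x within X)"
  using unbiased_x unfolding gradF_def by blast

lemma Fexp_weakly_convex_tangent: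
  assumes "x \<in> X" "w \<in> X" "y \<in> Y"
  shows "Fexp P f x y + gradF x y \<bullet> (w - x) - \<rho> / 2 * (norm (w - x))\<^sup>2 \<le> Fexp P f w y"
proof -
  have "((\<lambda>x. Fexp P f x y + \<rho> / 2 * (x \<bullet> x)) has_derivative
          (\<lambda>h. gradF x y \<bullet> h + \<rho> / 2 * (h \<bullet> x + x \<bullet> h))) (at x within X)"
    using has_derivative_Fexp[OF assms(1,3)] by (auto intro!: derivative_eq_intros)
  moreover have "convex_on X (\<lambda>x. Fexp P f x y + \<rho> / 2 * (x \<bullet> x))"
    using weakly_convex[OF assms(3)] by (simp add: power2_norm_eq_inner)
  ultimately have "Fexp P f x y + \<rho> / 2 * (x \<bullet> x) + (gradF x y \<bullet> (w - x) + \<rho> / 2 * ((w - x) \<bullet> x + x \<bullet> (w - x)))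
      \<le> Fexp P f w y + \<rho> / 2 * (w \<bullet> w)"
    using convex_on_has_derivative_within_tangent_le X(3) assms(1,2) by blast
  then show ?thesis
    unfolding power2_norm_eq_inner by (simp add: inner_diff_left inner_diff_right inner_commute algebra_simps)
qed

lemma gradF_weakly_monotone:
  assumes "a \<in> X" "b \<in> X" "y \<in> Y"
  shows "- \<rho> * (norm (a - b))\<^sup>2 \<le> (gradF a y - gradF b y) \<bullet> (a - b)"
  using Fexp_weakly_convex_tangent[OF assms] Fexp_weakly_convex_tangent[OF assms(2,1,3)]
  by (simp add: norm_minus_commute inner_diff_left inner_diff_right inner_commute algebra_simps)

lemma has_derivative_Fr:
  assumes "x \<in> X" "y \<in> Y"
  shows "(Fr y z has_derivative (\<lambda>h. (gradF x y + r *\<^sub>R (x - z)) \<bullet> h)) (at x within X)"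
proof -
  have "((\<lambda>x. Fexp P f x y + r / 2 * ((x - z) \<bullet> (x - z))) has_derivative
          (\<lambda>h. gradF x y \<bullet> h + r / 2 * (h \<bullet> (x - z) + (x - z) \<bullet> h))) (at x within X)"
    using has_derivative_Fexp[OF assms] by (auto intro!: derivative_eq_intros)
  then show ?thesis
    unfolding Fr_def power2_norm_eq_inner
    by (rule has_derivative_eq_rhs) (simp add: fun_eq_iff inner_add_left inner_commute algebra_simps)
qed

lemma Fr_strongly_convex_tangent:
  assumes "x \<in> X" "w \<in> X" "y \<in> Y"
  shows "Fr y z x + (gradF x y + r *\<^sub>R (x - z)) \<bullet> (w - x) + (r - \<rho>) / 2 * (norm (w - x))\<^sup>2 \<le> Fr y z w"
proof -
  have "r / 2 * (norm (w - z))\<^sup>2 = r / 2 * (norm (x - z))\<^sup>2 + (r *\<^sub>R (x - z)) \<bullet> (w - x) + r / 2 * (norm (w - x))\<^sup>2"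
    unfolding power2_norm_eq_inner by (simp add: inner_diff_left inner_diff_right inner_commute algebra_simps)
  moreover have "(gradF x y + r *\<^sub>R (x - z)) \<bullet> (w - x) = gradF x y \<bullet> (w - x) + (r *\<^sub>R (x - z)) \<bullet> (w - x)"
    by (simp add: inner_add_left)
  moreover have "(r - \<rho>) / 2 * (norm (w - x))\<^sup>2 = r / 2 * (norm (w - x))\<^sup>2 - \<rho> / 2 * (norm (w - x))\<^sup>2"
    by (simp add: left_diff_distrib diff_divide_distrib)
  ultimately show ?thesis
    using Fexp_weakly_convex_tangent[OF assms] unfolding Fr_def by linarith
qed

lemma ex_minimum_Fr:
  assumes y: "y \<in> Y"
  shows "\<exists>p. p \<in> X \<and> (\<forall>w\<in>X. Fr y z p \<le> Fr y z w)"
proof -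
  obtain x0 where x0: "x0 \<in> X" using X by auto
  define v0 where "v0 = gradF x0 y + r *\<^sub>R (x0 - z)"
  define \<mu> where "\<mu> = r - \<rho>"
  have \<mu>: "0 < \<mu>" using rho by (simp add: \<mu>_def)
  define R where "R = 2 * norm v0 / \<mu> + 1"
  have R: "0 \<le> R" using \<mu> by (simp add: R_def)
  define K where "K = X \<inter> cball x0 R"
  have K: "compact K" "K \<noteq> {}" using X x0 R by (auto simp: K_def intro!: closed_Int_compact)
  have "continuous_on X (Fr y z)"
    using has_derivative_Fr[OF _ y] by (intro has_derivative_continuous_on) blast
  then have "continuous_on K (Fr y z)" by (rule continuous_on_subset) (simp add: K_def)
  then obtain p where p: "p \<in> K" "\<And>w. w \<in> K \<Longrightarrow> Fr y z p \<le> Fr y z w"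
    using continuous_attains_inf[OF K] by blast
  text \<open>Outside the ball \<open>K\<close> the quadratic growth of \<open>Fr y z\<close> beats its value at \<open>x0\<close>.\<close>
  have "Fr y z p \<le> Fr y z w" if w: "w \<in> X" for w
  proof (cases "w \<in> K")
    case False
    then have far: "R < norm (w - x0)" using w by (auto simp: K_def dist_norm norm_minus_commute)
    have "Fr y z x0 + v0 \<bullet> (w - x0) + \<mu> / 2 * (norm (w - x0))\<^sup>2 \<le> Fr y z w"
      using Fr_strongly_convex_tangent[OF x0 w y] by (simp add: v0_def \<mu>_def)
    moreover have "- (norm v0 * norm (w - x0)) \<le> v0 \<bullet> (w - x0)"
      using Cauchy_Schwarz_ineq2[of v0 "w - x0"] by (simp add: abs_le_iff)
    moreover have "norm v0 * norm (w - x0) \<le> \<mu> / 2 * (norm (w - x0))\<^sup>2"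
    proof -
      have "2 * norm v0 / \<mu> \<le> norm (w - x0)" using far by (simp add: R_def)
      then have "2 * norm v0 \<le> \<mu> * norm (w - x0)" using \<mu> by (simp add: divide_le_eq mult.commute)
      then have "2 * norm v0 * norm (w - x0) \<le> \<mu> * norm (w - x0) * norm (w - x0)"
        by (rule mult_right_mono) simp
      then show ?thesis by (simp add: power2_eq_square algebra_simps)
    qed
    moreover have "Fr y z p \<le> Fr y z x0" using p x0 R by (auto simp: K_def)
    ultimately show ?thesis by linarith
  qed (use p in auto)
  then show ?thesis using p by (auto simp: K_def)
qed

lemma prox_mem: "y \<in> Y \<Longrightarrow> prox y z \<in> X"
  and prox_minimal: "y \<in> Y \<Longrightarrow> w \<in> X \<Longrightarrow> Fr y z (prox y z) \<le> Fr y z w"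
  using someI_ex[OF ex_minimum_Fr, of y z] unfolding prox_def by blast+

lemma prox_first_order:
  assumes y: "y \<in> Y" and w: "w \<in> X"
  shows "0 \<le> (gradF (prox y z) y + r *\<^sub>R (prox y z - z)) \<bullet> (w - prox y z)"
  using has_derivative_within_convex_minimum[OF has_derivative_Fr[OF prox_mem[OF y] y] X(3) prox_mem[OF y] w]
    prox_minimal[OF y] by blast

lemma prox_lipschitz:
  assumes y: "y \<in> Y"
  shows "(r - \<rho>) * norm (prox y z - prox y z') \<le> r * norm (z - z')"
proof -
  define p where "p = prox y z"
  define q where "q = prox y z'"
  have pq: "p \<in> X" "q \<in> X" using prox_mem[OF y] by (auto simp: p_def q_def)
  have "0 \<le> (gradF p y + r *\<^sub>R (p - z)) \<bullet> (q - p)" using prox_first_order[OF y pq(2), of z] by (simp add: p_def)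
  moreover have "0 \<le> (gradF q y + r *\<^sub>R (q - z')) \<bullet> (p - q)" using prox_first_order[OF y pq(1), of z'] by (simp add: q_def)
  moreover have "- \<rho> * (norm (p - q))\<^sup>2 \<le> (gradF p y - gradF q y) \<bullet> (p - q)" by (rule gradF_weakly_monotone[OF pq y])
  ultimately have "(r - \<rho>) * (norm (p - q))\<^sup>2 \<le> r * ((z - z') \<bullet> (p - q))"
    unfolding power2_norm_eq_inner
    by (simp add: inner_diff_left inner_diff_right inner_add_left inner_add_right inner_commute algebra_simps)
  also have "\<dots> \<le> r * (norm (z - z') * norm (p - q))"
    using rho by (intro mult_left_mono) (auto intro: order_trans[OF _ Cauchy_Schwarz_ineq2])
  finally have "(r - \<rho>) * norm (p - q) * norm (p - q) \<le> r * norm (z - z') * norm (p - q)"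
    by (simp add: power2_eq_square algebra_simps)
  then show ?thesis
    by (cases "norm (p - q) = 0") (use rho in \<open>auto simp: p_def q_def\<close>)
qed

lemma d_r_eq_Fr_prox:
  assumes y: "y \<in> Y"
  shows "d_r X P f r y z = Fr y z (prox y z)"
proof -
  have "d_r X P f r y z = Inf (Fr y z ` X)" by (simp add: d_r_def Fr_def)
  also have "\<dots> = Fr y z (prox y z)"
    using prox_mem[OF y] prox_minimal[OF y] by (intro cInf_eq_minimum) auto
  finally show ?thesis .
qed

lemma d_r_le_Fr: "y \<in> Y \<Longrightarrow> q \<in> X \<Longrightarrow> d_r X P f r y z \<le> Fr y z q"
  using d_r_eq_Fr_prox prox_minimal by simp

lemma Fr_shift_eq:
  "Fr y z' q - Fr y z q = (r *\<^sub>R (z - q)) \<bullet> (z' - z) + r / 2 * (norm (z' - z))\<^sup>2"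
proof -
  have "r / 2 * (norm (q - z'))\<^sup>2 = r / 2 * (norm (q - z))\<^sup>2 + (r *\<^sub>R (z - q)) \<bullet> (z' - z) + r / 2 * (norm (z' - z))\<^sup>2"
    unfolding power2_norm_eq_inner by (simp add: inner_diff_left inner_diff_right inner_commute algebra_simps)
  then show ?thesis unfolding Fr_def by linarith
qed

lemma d_r_upper_quadratic:
  assumes y: "y \<in> Y"
  shows "d_r X P f r y z' - d_r X P f r y z - (r *\<^sub>R (z - prox y z)) \<bullet> (z' - z) \<le> r / 2 * (norm (z' - z))\<^sup>2"
  using d_r_le_Fr[OF y prox_mem[OF y], of z' z] d_r_eq_Fr_prox[OF y, of z] Fr_shift_eq[of y z' "prox y z" z]
  by linarith

lemma d_r_lower_quadratic:
  assumes y: "y \<in> Y"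
  shows "- (r\<^sup>2 / (r - \<rho>) * (norm (z' - z))\<^sup>2) \<le> d_r X P f r y z' - d_r X P f r y z - (r *\<^sub>R (z - prox y z)) \<bullet> (z' - z)"
proof -
  define p where "p = prox y z"
  define q where "q = prox y z'"
  define \<delta> where "\<delta> = norm (z' - z)"
  have "(r *\<^sub>R (z - q)) \<bullet> (z' - z) + r / 2 * \<delta>\<^sup>2 \<le> d_r X P f r y z' - d_r X P f r y z"
    using d_r_le_Fr[OF y prox_mem[OF y], of z z'] d_r_eq_Fr_prox[OF y, of z'] Fr_shift_eq[of y z' q z]
    by (simp add: q_def \<delta>_def)
  moreover have "(r *\<^sub>R (z - q)) \<bullet> (z' - z) - (r *\<^sub>R (z - p)) \<bullet> (z' - z) = r * ((p - q) \<bullet> (z' - z))"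
    by (simp add: inner_diff_left algebra_simps)
  moreover have "- (r / (r - \<rho>) * \<delta> * \<delta>) \<le> (p - q) \<bullet> (z' - z)"
  proof -
    have "norm (p - q) \<le> r / (r - \<rho>) * \<delta>"
      using prox_lipschitz[OF y, of z z'] rho by (simp add: p_def q_def \<delta>_def field_simps norm_minus_commute)
    then have "norm (p - q) * \<delta> \<le> r / (r - \<rho>) * \<delta> * \<delta>"
      by (rule mult_right_mono) (simp add: \<delta>_def)
    moreover have "- (norm (p - q) * \<delta>) \<le> (p - q) \<bullet> (z' - z)"
      using Cauchy_Schwarz_ineq2[of "p - q" "z' - z"] by (simp add: \<delta>_def abs_le_iff)
    ultimately show ?thesis by linarith
  qed
  then have "r * - (r / (r - \<rho>) * \<delta> * \<delta>) \<le> r * ((p - q) \<bullet> (z' - z))"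
    using rho by (intro mult_left_mono) auto
  moreover have "r * - (r / (r - \<rho>) * \<delta> * \<delta>) = - (r\<^sup>2 / (r - \<rho>) * \<delta>\<^sup>2)"
    by (simp add: power2_eq_square)
  moreover have "0 \<le> r / 2 * \<delta>\<^sup>2" using rho by simp
  ultimately show ?thesis unfolding p_def \<delta>_def by linarith
qed

lemma has_derivative_d_r:
  assumes y: "y \<in> Y"
  shows "(d_r X P f r y has_derivative (\<lambda>h. (r *\<^sub>R (z - prox y z)) \<bullet> h)) (at z)"
  unfolding has_derivative_iff_norm
proof
  show "bounded_linear (\<lambda>h. (r *\<^sub>R (z - prox y z)) \<bullet> h)" by (rule bounded_linear_inner_right)
  define C where "C = r / 2 + r\<^sup>2 / (r - \<rho>)"
  let ?rem = "\<lambda>z'. d_r X P f r y z' - d_r X P f r y z - (r *\<^sub>R (z - prox y z)) \<bullet> (z' - z)"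
  have "norm (norm (?rem z') / norm (z' - z)) \<le> C * norm (z' - z)" for z'
  proof (cases "z' = z")
    case False
    have "0 \<le> r / 2 * (norm (z' - z))\<^sup>2" "0 \<le> r\<^sup>2 / (r - \<rho>) * (norm (z' - z))\<^sup>2"
      using rho by simp_all
    then have "\<bar>?rem z'\<bar> \<le> C * (norm (z' - z))\<^sup>2"
      using d_r_upper_quadratic[OF y, of z' z] d_r_lower_quadratic[OF y, of z' z]
      unfolding C_def distrib_right by (intro abs_leI) linarith+
    moreover have "0 < norm (z' - z)" using False by simp
    ultimately show ?thesis by (simp add: divide_le_eq power2_eq_square mult.assoc)
  qed simp
  then have "\<forall>\<^sub>F z' in at z. norm (norm (?rem z') / norm (z' - z)) \<le> C * norm (z' - z)"
    by (intro always_eventually allI)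
  moreover have "((\<lambda>z'. C * norm (z' - z)) \<longlongrightarrow> C * norm (z - z)) (at z)"
    by (intro tendsto_intros)
  then have "((\<lambda>z'. C * norm (z' - z)) \<longlongrightarrow> 0) (at z)" by simp
  ultimately show "((\<lambda>z'. norm (?rem z') / norm (z' - z)) \<longlongrightarrow> 0) (at z)"
    by (rule Lim_null_comparison)
qed

lemma grad_d_r:
  assumes y: "y \<in> Y"
  shows "grad (\<lambda>z. d_r X P f r y z) z = r *\<^sub>R (z - prox y z)"
  unfolding grad_def
proof (rule the_equality)
  fix v assume "((\<lambda>z. d_r X P f r y z) has_derivative (\<lambda>h. v \<bullet> h)) (at z)"
  then have "(\<lambda>h. v \<bullet> h) = (\<lambda>h. (r *\<^sub>R (z - prox y z)) \<bullet> h)"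
    using has_derivative_unique[OF _ has_derivative_d_r[OF y]] by blast
  then have "v \<bullet> (v - r *\<^sub>R (z - prox y z)) = (r *\<^sub>R (z - prox y z)) \<bullet> (v - r *\<^sub>R (z - prox y z))"
    by (rule fun_cong)
  then have "(v - r *\<^sub>R (z - prox y z)) \<bullet> (v - r *\<^sub>R (z - prox y z)) = 0" by (simp add: inner_diff_left)
  then show "v = r *\<^sub>R (z - prox y z)" by simp
qed (rule has_derivative_d_r[OF y])

lemma gradF_lipschitz_x:
  "x1 \<in> X \<Longrightarrow> x2 \<in> X \<Longrightarrow> y \<in> Y \<Longrightarrow> norm (gradF x1 y - gradF x2 y) \<le> Lx * norm (x1 - x2)"
  unfolding gradF_def using L_nonneg
  by (intro prob_space.norm_integral_diff_le_if_nn_integral_sq_le[OF P] integrable_gx lip_gx_x) auto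

lemma gradF_lipschitz_y:
  "x \<in> X \<Longrightarrow> y1 \<in> Y \<Longrightarrow> y2 \<in> Y \<Longrightarrow> norm (gradF x y1 - gradF x y2) \<le> Ly * norm (y1 - y2)"
  unfolding gradF_def using L_nonneg
  by (intro prob_space.norm_integral_diff_le_if_nn_integral_sq_le[OF P] integrable_gx lip_gx_y) auto

lemma gradF_lipschitz:
  assumes "x \<in> X" "x' \<in> X" "y \<in> Y" "y' \<in> Y"
  shows "norm (gradF x' y' - gradF x y) \<le> Lx * norm (x' - x) + Ly * norm (y' - y)"
proof -
  have "norm (gradF x' y' - gradF x y) \<le> norm (gradF x' y' - gradF x y') + norm (gradF x y' - gradF x y)"
    using norm_triangle_ineq[of "gradF x' y' - gradF x y'" "gradF x y' - gradF x y"] by simp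
  then show ?thesis using gradF_lipschitz_x[OF assms(2,1,4)] gradF_lipschitz_y[OF assms(1,4,3)] by linarith
qed

lemma projected_step_prox_inner_bound:
  assumes x: "x \<in> X" and y': "y' \<in> Y" and \<alpha>: "0 < \<alpha>"
    and x': "x' = closest_point X (x - \<alpha> *\<^sub>R (G + r *\<^sub>R (x - z)))"
    and u: "u = x' - prox y' x'"
  shows "\<alpha> * ((r - \<rho>) * (norm u)\<^sup>2)
           \<le> (x - x') \<bullet> u - \<alpha> * (r * ((x - z) \<bullet> u)) - \<alpha> * ((G - gradF x y) \<bullet> u)
             + \<alpha> * ((gradF x' y' - gradF x y) \<bullet> u)"
proof -
  define p where "p = prox y' x'"
  define a where "a = x - \<alpha> *\<^sub>R (G + r *\<^sub>R (x - z))"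
  have x'X: "x' \<in> X" unfolding x' using X by (intro closest_point_in_set) auto
  have pX: "p \<in> X" unfolding p_def by (rule prox_mem[OF y'])
  have "0 \<le> (gradF p y' + r *\<^sub>R (p - x')) \<bullet> (x' - p)"
    using prox_first_order[OF y' x'X, of x'] by (simp add: p_def)
  then have opt: "r * (norm u)\<^sup>2 \<le> gradF p y' \<bullet> u"
    unfolding u p_def[symmetric] power2_norm_eq_inner
    by (simp add: inner_diff_left inner_diff_right inner_commute algebra_simps)
  have "(a - x') \<bullet> (p - x') \<le> 0"
    using any_closest_point_dot[OF X(3) X(2)] pX closest_point_exists(2)[OF X(2) X(1)] x'X
    unfolding x' a_def[symmetric] by blast
  then have "0 \<le> (a - x') \<bullet> u" unfolding u p_def[symmetric]
    by (metis inner_minus_right minus_diff_eq neg_le_0_iff_le)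
  moreover have "(a - x') \<bullet> u = (x - x') \<bullet> u - \<alpha> * (G \<bullet> u) - \<alpha> * (r * ((x - z) \<bullet> u))"
    unfolding a_def by (simp add: inner_diff_left inner_add_left algebra_simps)
  ultimately have proj: "\<alpha> * (G \<bullet> u) \<le> (x - x') \<bullet> u - \<alpha> * (r * ((x - z) \<bullet> u))" by linarith
  have "- \<rho> * (norm u)\<^sup>2 \<le> (gradF x' y' - gradF p y') \<bullet> u"
    unfolding u p_def[symmetric] by (rule gradF_weakly_monotone[OF x'X pX y'])
  with opt have "(r - \<rho>) * (norm u)\<^sup>2 \<le> G \<bullet> u - (G - gradF x y) \<bullet> u + (gradF x' y' - gradF x y) \<bullet> u"
    by (simp add: inner_diff_left algebra_simps)
  then have "\<alpha> * ((r - \<rho>) * (norm u)\<^sup>2) \<le> \<alpha> * (G \<bullet> u - (G - gradF x y) \<bullet> u + (gradF x' y' - gradF x y) \<bullet> u)"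
    using \<alpha> by (intro mult_left_mono) auto
  with proj show ?thesis by (simp add: algebra_simps)
qed

lemma projected_step_prox_bound:
  assumes x: "x \<in> X" and y: "y \<in> Y" and y': "y' \<in> Y" and \<alpha>: "0 < \<alpha>"
    and x': "x' = closest_point X (x - \<alpha> *\<^sub>R (G + r *\<^sub>R (x - z)))"
  shows "(r - \<rho>) * norm (x' - prox y' x')
           \<le> (1 / \<alpha> + Lx + r) * norm (x' - x) + r * norm (x' - z) + Ly * norm (y' - y) + norm (G - gradF x y)"
    (is "_ \<le> ?A")
proof -
  define u where "u = x' - prox y' x'"
  define e where "e = G - gradF x y"
  define D where "D = gradF x' y' - gradF x y"
  have x'X: "x' \<in> X" unfolding x' using X by (intro closest_point_in_set) auto
  have r: "0 < r" using rho by simp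
  have "(x - x') \<bullet> u \<le> norm (x' - x) * norm u"
    using norm_cauchy_schwarz[of "x - x'" u] by (simp add: norm_minus_commute)
  moreover have "\<alpha> * (r * - ((x - z) \<bullet> u)) \<le> \<alpha> * (r * (norm (x - z) * norm u))"
    using norm_cauchy_schwarz[of "z - x" u] \<alpha> r
    by (intro mult_left_mono) (auto simp: norm_minus_commute inner_diff_left)
  moreover have "\<alpha> * - (e \<bullet> u) \<le> \<alpha> * (norm e * norm u)"
    using norm_cauchy_schwarz[of "- e" u] \<alpha> by (intro mult_left_mono) auto
  moreover have "\<alpha> * (D \<bullet> u) \<le> \<alpha> * (norm D * norm u)"
    using norm_cauchy_schwarz[of D u] \<alpha> by (intro mult_left_mono) auto
  ultimately have "\<alpha> * ((r - \<rho>) * norm u) * norm u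
      \<le> (norm (x' - x) + \<alpha> * (r * norm (x - z)) + \<alpha> * norm e + \<alpha> * norm D) * norm u"
    using projected_step_prox_inner_bound[OF x y' \<alpha> x' u_def, of y]
    by (simp add: e_def D_def power2_eq_square algebra_simps)
  moreover have "norm D \<le> Lx * norm (x' - x) + Ly * norm (y' - y)"
    unfolding D_def by (rule gradF_lipschitz[OF x x'X y y'])
  moreover have "norm (x - z) \<le> norm (x' - x) + norm (x' - z)"
    using norm_triangle_ineq[of "x - x'" "x' - z"] by (simp add: norm_minus_commute)
  moreover have "0 \<le> ?A" using \<alpha> r L_nonneg by (intro add_nonneg_nonneg mult_nonneg_nonneg) auto
  ultimately show ?thesis
  proof (cases "norm u = 0")
    case False
    assume bound: "\<alpha> * ((r - \<rho>) * norm u) * norm u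
        \<le> (norm (x' - x) + \<alpha> * (r * norm (x - z)) + \<alpha> * norm e + \<alpha> * norm D) * norm u"
      and D: "norm D \<le> Lx * norm (x' - x) + Ly * norm (y' - y)"
      and xz: "norm (x - z) \<le> norm (x' - x) + norm (x' - z)"
    have "\<alpha> * ((r - \<rho>) * norm u) \<le> norm (x' - x) + \<alpha> * (r * norm (x - z)) + \<alpha> * norm e + \<alpha> * norm D"
      using bound False by simp
    also have "\<dots> \<le> norm (x' - x) + \<alpha> * (r * (norm (x' - x) + norm (x' - z))) + \<alpha> * norm e
        + \<alpha> * (Lx * norm (x' - x) + Ly * norm (y' - y))"
      using D xz \<alpha> r by (intro add_mono mult_left_mono order_refl) auto
    also have "\<dots> = \<alpha> * ?A" using \<alpha> by (simp add: e_def field_simps)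
    finally show ?thesis using \<alpha> by (simp add: u_def)
  qed (simp add: u_def)
qed

lemma projected_step_grad_d_r_bound:
  assumes x: "x \<in> X" and y: "y \<in> Y" and y': "y' \<in> Y" and \<alpha>: "0 < \<alpha>" and r: "2 * \<rho> \<le> r"
    and x': "x' = closest_point X (x - \<alpha> *\<^sub>R (G + r *\<^sub>R (x - z)))"
  shows "(norm (grad (\<lambda>z. d_r X P f r y' z) x'))\<^sup>2
           \<le> 18 * ((1 / \<alpha> + Lx + r) * norm (x' - x))\<^sup>2 + 12 * (r * norm (x' - z))\<^sup>2
             + 18 * (Ly * norm (y' - y))\<^sup>2 + 18 * (norm (G - gradF x y))\<^sup>2"
proof -
  define A where "A = (1 / \<alpha> + Lx + r) * norm (x' - x) + r * norm (x' - z) + Ly * norm (y' - y) + norm (G - gradF x y)"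
  have "r * norm (x' - prox y' x') \<le> 2 * ((r - \<rho>) * norm (x' - prox y' x'))"
    using r mult_right_mono[OF r, of "norm (x' - prox y' x')"] by (simp add: algebra_simps)
  also have "\<dots> \<le> 2 * A"
    using projected_step_prox_bound[OF x y y' \<alpha> x'] by (simp add: A_def)
  finally have "norm (grad (\<lambda>z. d_r X P f r y' z) x') \<le> 2 * A"
    using rho by (simp add: grad_d_r[OF y'])
  then have "(norm (grad (\<lambda>z. d_r X P f r y' z) x'))\<^sup>2 \<le> (2 * A)\<^sup>2"
    by (rule power_mono) simp
  also have "(2 * A)\<^sup>2 = 4 * A\<^sup>2" by (simp add: power2_eq_square)
  also have "\<dots> \<le> 12 * (r * norm (x' - z))\<^sup>2
       + 18 * (((1 / \<alpha> + Lx + r) * norm (x' - x))\<^sup>2 + (Ly * norm (y' - y))\<^sup>2 + (norm (G - gradF x y))\<^sup>2)"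
    unfolding A_def by (rule sq_sum4_le)
  finally show ?thesis by simp
qed

lemma nn_integral_gx_increment_sq_le:
  assumes "x \<in> X" "x' \<in> X" "y \<in> Y" "y' \<in> Y"
  shows "(\<integral>\<^sup>+s. ennreal ((norm (gx x' y' s - gx x y s))\<^sup>2) \<partial>P)
     \<le> ennreal (2 * Lx\<^sup>2 * (norm (x' - x))\<^sup>2 + 2 * Ly\<^sup>2 * (norm (y' - y))\<^sup>2)"
proof -
  have [measurable]: "gx x' y' \<in> borel_measurable P" "gx x y' \<in> borel_measurable P" "gx x y \<in> borel_measurable P"
    using integrable_gx assms by auto
  have "(\<integral>\<^sup>+s. ennreal ((norm (gx x' y' s - gx x y s))\<^sup>2) \<partial>P)
      \<le> (\<integral>\<^sup>+s. 2 * ennreal ((norm (gx x' y' s - gx x y' s))\<^sup>2) + 2 * ennreal ((norm (gx x y' s - gx x y s))\<^sup>2) \<partial>P)"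
  proof (rule nn_integral_mono)
    fix s
    have "gx x' y' s - gx x y s = (gx x' y' s - gx x y' s) + (gx x y' s - gx x y s)" by simp
    then have "(norm (gx x' y' s - gx x y s))\<^sup>2 \<le> 2 * (norm (gx x' y' s - gx x y' s))\<^sup>2 + 2 * (norm (gx x y' s - gx x y s))\<^sup>2"
      using norm_add_sq_le by metis
    then show "ennreal ((norm (gx x' y' s - gx x y s))\<^sup>2)
        \<le> 2 * ennreal ((norm (gx x' y' s - gx x y' s))\<^sup>2) + 2 * ennreal ((norm (gx x y' s - gx x y s))\<^sup>2)"
      using ennreal_leI ennreal_mult_add_mult[of 2 _ 2] by (metis ennreal_numeral zero_le_power2 zero_le_numeral)
  qed
  also have "\<dots> = 2 * (\<integral>\<^sup>+s. ennreal ((norm (gx x' y' s - gx x y' s))\<^sup>2) \<partial>P)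
      + 2 * (\<integral>\<^sup>+s. ennreal ((norm (gx x y' s - gx x y s))\<^sup>2) \<partial>P)"
    by (simp add: nn_integral_add nn_integral_cmult)
  also have "\<dots> \<le> 2 * ennreal (Lx\<^sup>2 * (norm (x' - x))\<^sup>2) + 2 * ennreal (Ly\<^sup>2 * (norm (y' - y))\<^sup>2)"
    by (intro add_mono mult_left_mono lip_gx_x lip_gx_y assms) auto
  also have "\<dots> = ennreal (2 * Lx\<^sup>2 * (norm (x' - x))\<^sup>2 + 2 * Ly\<^sup>2 * (norm (y' - y))\<^sup>2)"
    using ennreal_mult_add_mult[of 2 "Lx\<^sup>2 * (norm (x' - x))\<^sup>2" 2 "Ly\<^sup>2 * (norm (y' - y))\<^sup>2"]
    by (simp add: mult.assoc)
  finally show ?thesis .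
qed

end

section \<open>The iterates as functions of the samples\<close>

abbreviation pos_x :: "'a \<times> 'b \<times> 'c \<times> 'd \<times> 'e \<Rightarrow> 'a" where "pos_x S \<equiv> fst S"
abbreviation pos_y :: "'a \<times> 'b \<times> 'c \<times> 'd \<times> 'e \<Rightarrow> 'b" where "pos_y S \<equiv> fst (snd S)"
abbreviation pos_z :: "'a \<times> 'b \<times> 'c \<times> 'd \<times> 'e \<Rightarrow> 'c" where "pos_z S \<equiv> fst (snd (snd S))"
abbreviation est_x :: "'a \<times> 'b \<times> 'c \<times> 'd \<times> 'e \<Rightarrow> 'd" where "est_x S \<equiv> fst (snd (snd (snd S)))"
abbreviation est_y :: "'a \<times> 'b \<times> 'c \<times> 'd \<times> 'e \<Rightarrow> 'e" where "est_y S \<equiv> snd (snd (snd (snd S)))"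

definition init_batch_size :: "'xi setting \<Rightarrow> nat" where
  "init_batch_size s = (case s of Online B \<Rightarrow> B | FiniteSum _ \<Rightarrow> 0)"

lemma init_est_cong:
  assumes "\<And>i. i < init_batch_size s \<Longrightarrow> smp i = smp' i"
  shows "init_est s g smp x y = init_est s g smp' x y"
  using assms by (cases s) (auto simp: init_est_def init_batch_size_def intro!: sum.cong)

lemma borel_measurable_fst_comp[measurable (raw)]:
  "g \<in> borel_measurable N \<Longrightarrow> (\<lambda>w. fst (g w)) \<in> borel_measurable N"
  by (rule measurable_compose[of g N borel fst]) (auto intro!: borel_measurable_continuous_onI continuous_intros)

lemma borel_measurable_snd_comp[measurable (raw)]:
  "g \<in> borel_measurable N \<Longrightarrow> (\<lambda>w. snd (g w)) \<in> borel_measurable N"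
  by (rule measurable_compose[of g N borel snd]) (auto intro!: borel_measurable_continuous_onI continuous_intros)

lemma borel_measurable_closest_point:
  assumes "convex S" "closed S" "S \<noteq> {}" "g \<in> borel_measurable N"
  shows "(\<lambda>w. closest_point S (g w)) \<in> borel_measurable N"
  by (rule measurable_compose[OF assms(4)])
    (rule borel_measurable_continuous_onI[OF continuous_on_closest_point[OF assms(1-3)]])

text \<open>
  A family of samples is a function \<open>t\<close> on triples \<open>(k, \<tau>, i)\<close>; \<open>batch m\<close> is the set of indices
  read at global step \<open>m = k T + \<tau>\<close> (none for the full gradient of the finite-sum setting).
\<close>

locale algorithm =
  fixes X :: "'x::euclidean_space set" and Y :: "'y::euclidean_space set"
    and gx :: "'x \<Rightarrow> 'y \<Rightarrow> 'xi \<Rightarrow> 'x" and gy :: "'x \<Rightarrow> 'y \<Rightarrow> 'xi \<Rightarrow> 'y" and s :: "'xi setting"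
    and T M :: nat and \<alpha>x \<alpha>y \<beta> r :: real and x0 :: 'x and y0 :: 'y and z0 :: 'x and P :: "'xi measure"
  assumes X: "X \<noteq> {}" "closed X" "convex X" and Y: "Y \<noteq> {}" "closed Y" "convex Y"
    and meas_gx: "(\<lambda>(x, y, z). gx x y z) \<in> borel_measurable (borel \<Otimes>\<^sub>M (borel \<Otimes>\<^sub>M P))"
    and meas_gy: "(\<lambda>(x, y, z). gy x y z) \<in> borel_measurable (borel \<Otimes>\<^sub>M (borel \<Otimes>\<^sub>M P))"
    and finite_sum_space: "\<And>ss. s = FiniteSum ss \<Longrightarrow> space P = UNIV"
begin

definition state where "state t n = alg X Y gx gy s (\<lambda>k \<tau> i. t (k, \<tau>, i)) T M \<alpha>x \<alpha>y \<beta> r x0 y0 z0 n"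

definition batch_size where "batch_size m = (if m mod T = 0 then init_batch_size s else M)"

definition batch where "batch m = {(m div T, m mod T, i) | i. i < batch_size m}"

definition step where "step t n S = (let x = pos_x S; y = pos_y S; z = pos_z S;
      x' = closest_point X (x - \<alpha>x *\<^sub>R (est_x S + r *\<^sub>R (x - z)));
      y' = closest_point Y (y + \<alpha>y *\<^sub>R est_y S);
      z' = z + \<beta> *\<^sub>R (x' - z); k = Suc n div T; \<tau> = Suc n mod T
   in if \<tau> = 0 then (x', y', z', init_est s gx (\<lambda>i. t (k, 0, i)) x' y', init_est s gy (\<lambda>i. t (k, 0, i)) x' y')
      else (x', y', z',
            (1 / real M) *\<^sub>R (\<Sum>i<M. gx x' y' (t (k, \<tau>, i)) - gx x y (t (k, \<tau>, i))) + est_x S,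
            (1 / real M) *\<^sub>R (\<Sum>i<M. gy x' y' (t (k, \<tau>, i)) - gy x y (t (k, \<tau>, i))) + est_y S))"

lemma state_0:
  "state t 0 = (x0, y0, z0, init_est s gx (\<lambda>i. t (0, 0, i)) x0 y0, init_est s gy (\<lambda>i. t (0, 0, i)) x0 y0)"
  by (simp add: state_def)

lemma state_Suc: "state t (Suc n) = step t n (state t n)"
proof (cases "state t n")
  case (fields x y z Gx Gy)
  then show ?thesis unfolding state_def step_def by (simp add: Let_def)
qed

lemma state_Suc_pos:
  "pos_x (state t (Suc n)) = closest_point X (pos_x (state t n) - \<alpha>x *\<^sub>R (est_x (state t n) + r *\<^sub>R (pos_x (state t n) - pos_z (state t n))))"
  "pos_y (state t (Suc n)) = closest_point Y (pos_y (state t n) + \<alpha>y *\<^sub>R est_y (state t n))"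
  "pos_z (state t (Suc n)) = pos_z (state t n) + \<beta> *\<^sub>R (pos_x (state t (Suc n)) - pos_z (state t n))"
  unfolding state_Suc step_def Let_def by simp_all

lemma state_est_x_epoch_start:
  assumes "m mod T = 0"
  shows "est_x (state t m) = init_est s gx (\<lambda>i. t (m div T, 0, i)) (pos_x (state t m)) (pos_y (state t m))"
proof (cases m)
  case (Suc n)
  show ?thesis using assms unfolding Suc state_Suc step_def Let_def by simp
qed (simp add: state_0)

lemma state_est_x_Suc:
  assumes "Suc n mod T \<noteq> 0"
  shows "est_x (state t (Suc n)) = (1 / real M) *\<^sub>R
           (\<Sum>i<M. gx (pos_x (state t (Suc n))) (pos_y (state t (Suc n))) (t (Suc n div T, Suc n mod T, i))
              - gx (pos_x (state t n)) (pos_y (state t n)) (t (Suc n div T, Suc n mod T, i)))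
           + est_x (state t n)"
  using assms unfolding state_Suc_pos(1,2) unfolding state_Suc step_def Let_def by simp

lemma state_in_XY:
  assumes "x0 \<in> X" "y0 \<in> Y"
  shows "pos_x (state t n) \<in> X" "pos_y (state t n) \<in> Y"
  using assms X Y by (cases n; simp add: state_0 state_Suc_pos closest_point_in_set)+

lemma step_cong:
  assumes "\<And>j. j \<in> batch (Suc n) \<Longrightarrow> t j = t' j"
  shows "step t n S = step t' n S"
proof (cases "Suc n mod T = 0")
  case True
  then have "\<And>i. i < init_batch_size s \<Longrightarrow> t (Suc n div T, 0, i) = t' (Suc n div T, 0, i)"
    using assms by (auto simp: batch_def batch_size_def)
  then show ?thesis using True unfolding step_def Let_def
    by (simp add: init_est_cong[of s "\<lambda>i. t (Suc n div T, 0, i)" "\<lambda>i. t' (Suc n div T, 0, i)"])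
next
  case False
  then have "\<And>i. i < M \<Longrightarrow> t (Suc n div T, Suc n mod T, i) = t' (Suc n div T, Suc n mod T, i)"
    using assms by (auto simp: batch_def batch_size_def)
  then show ?thesis using False unfolding step_def Let_def by simp
qed

lemma state_cong:
  assumes "\<And>m j. m \<le> n \<Longrightarrow> j \<in> batch m \<Longrightarrow> t j = t' j"
  shows "state t n = state t' n"
  using assms
proof (induction n)
  case 0
  then have "\<And>i. i < init_batch_size s \<Longrightarrow> t (0, 0, i) = t' (0, 0, i)"
    by (auto simp: batch_def batch_size_def)
  then show ?case unfolding state_0
    by (simp add: init_est_cong[of s "\<lambda>i. t (0, 0, i)" "\<lambda>i. t' (0, 0, i)"])
next
  case (Suc n)
  have "state t n = state t' n" by (rule Suc.IH) (meson Suc.prems le_SucI)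
  moreover have "step t n (state t' n) = step t' n (state t' n)"
    using Suc.prems by (intro step_cong) auto
  ultimately show ?case by (simp add: state_Suc)
qed

lemma state_pos_cong:
  assumes "\<And>m' j. m' < m \<Longrightarrow> j \<in> batch m' \<Longrightarrow> t j = t' j"
  shows "pos_x (state t m) = pos_x (state t' m)" "pos_y (state t m) = pos_y (state t' m)"
proof (atomize (full), cases m)
  case (Suc n)
  have "state t n = state t' n" by (rule state_cong) (use assms Suc less_Suc_eq_le in blast)
  then show "pos_x (state t m) = pos_x (state t' m) \<and> pos_y (state t m) = pos_y (state t' m)"
    unfolding Suc state_Suc_pos by simp
qed (simp add: state_0)

lemma measurable_gx[measurable (raw)]:
  assumes "f1 \<in> borel_measurable N" "f2 \<in> borel_measurable N" "f3 \<in> measurable N P"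
  shows "(\<lambda>w. gx (f1 w) (f2 w) (f3 w)) \<in> borel_measurable N"
  using measurable_compose[OF measurable_Pair[OF assms(1) measurable_Pair[OF assms(2,3)]] meas_gx] by simp

lemma measurable_gy[measurable (raw)]:
  assumes "f1 \<in> borel_measurable N" "f2 \<in> borel_measurable N" "f3 \<in> measurable N P"
  shows "(\<lambda>w. gy (f1 w) (f2 w) (f3 w)) \<in> borel_measurable N"
  using measurable_compose[OF measurable_Pair[OF assms(1) measurable_Pair[OF assms(2,3)]] meas_gy] by simp

lemma measurable_closest_point_X[measurable (raw)]:
  "g \<in> borel_measurable N \<Longrightarrow> (\<lambda>w. closest_point X (g w)) \<in> borel_measurable N"
  using borel_measurable_closest_point[OF X(3) X(2) X(1)] by blast

lemma measurable_closest_point_Y[measurable (raw)]: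
  "g \<in> borel_measurable N \<Longrightarrow> (\<lambda>w. closest_point Y (g w)) \<in> borel_measurable N"
  using borel_measurable_closest_point[OF Y(3) Y(2) Y(1)] by blast

lemma measurable_init_est:
  assumes [measurable]: "f1 \<in> borel_measurable N" "f2 \<in> borel_measurable N"
    and smp: "\<And>i. i < init_batch_size s \<Longrightarrow> (\<lambda>w. smp w i) \<in> measurable N P"
  shows "(\<lambda>w. init_est s gx (smp w) (f1 w) (f2 w)) \<in> borel_measurable N
       \<and> (\<lambda>w. init_est s gy (smp w) (f1 w) (f2 w)) \<in> borel_measurable N"
proof (cases s)
  case (Online B)
  have [measurable]: "\<And>i. i < B \<Longrightarrow> (\<lambda>w. smp w i) \<in> measurable N P"
    using smp Online by (auto simp: init_batch_size_def)
  show ?thesis unfolding init_est_def Online by simp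
next
  case (FiniteSum ss)
  have sum_list_eq: "sum_list (map g ss) = (\<Sum>i<length ss. g (ss ! i))" for g :: "'xi \<Rightarrow> 'v::real_normed_vector"
    by (simp add: sum_list_sum_nth atLeast0LessThan)
  have [measurable]: "\<And>i. (\<lambda>w. ss ! i) \<in> measurable N P"
    using finite_sum_space FiniteSum by (intro measurable_const) auto
  show ?thesis unfolding init_est_def FiniteSum by (simp add: sum_list_eq)
qed

lemma measurable_step:
  assumes S[measurable]: "S \<in> borel_measurable N"
    and samples: "\<And>j. j \<in> batch (Suc n) \<Longrightarrow> (\<lambda>w. tt w j) \<in> measurable N P"
  shows "(\<lambda>w. step (tt w) n (S w)) \<in> borel_measurable N"
proof (cases "Suc n mod T = 0")
  case True
  let ?x' = "\<lambda>w. closest_point X (pos_x (S w) - \<alpha>x *\<^sub>R (est_x (S w) + r *\<^sub>R (pos_x (S w) - pos_z (S w))))"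
  let ?y' = "\<lambda>w. closest_point Y (pos_y (S w) + \<alpha>y *\<^sub>R est_y (S w))"
  have x'[measurable]: "?x' \<in> borel_measurable N" by measurable
  have y'[measurable]: "?y' \<in> borel_measurable N" by measurable
  have "\<And>i. i < init_batch_size s \<Longrightarrow> (\<lambda>w. tt w (Suc n div T, 0, i)) \<in> measurable N P"
    using samples True by (auto simp: batch_def batch_size_def)
  note init = measurable_init_est[where smp="\<lambda>w i. tt w (Suc n div T, 0, i)", OF x' y' this]
  show ?thesis unfolding step_def Let_def using True conjunct1[OF init] conjunct2[OF init] by simp
next
  case False
  have [measurable]: "\<And>i. i < M \<Longrightarrow> (\<lambda>w. tt w (Suc n div T, Suc n mod T, i)) \<in> measurable N P"
    using samples False by (auto simp: batch_def batch_size_def)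
  show ?thesis unfolding step_def Let_def using False by simp
qed

lemma measurable_state:
  assumes "\<And>m j. m \<le> n \<Longrightarrow> j \<in> batch m \<Longrightarrow> (\<lambda>w. tt w j) \<in> measurable N P"
  shows "(\<lambda>w. state (tt w) n) \<in> borel_measurable N"
  using assms
proof (induction n)
  case 0
  then have "\<And>i. i < init_batch_size s \<Longrightarrow> (\<lambda>w. tt w (0, 0, i)) \<in> measurable N P"
    by (auto simp: batch_def batch_size_def)
  note init = measurable_init_est[OF borel_measurable_const borel_measurable_const this]
  show ?case unfolding state_0 using conjunct1[OF init] conjunct2[OF init] by simp
next
  case (Suc n)
  have "(\<lambda>w. state (tt w) n) \<in> borel_measurable N" by (rule Suc.IH) (use Suc.prems le_SucI in blast)
  then show ?case unfolding state_Suc by (rule measurable_step) (use Suc.prems in auto)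
qed

end

section \<open>The mean squared error of the gradient estimator\<close>

locale stochastic_algorithm =
  algorithm X Y gx gy s T M \<alpha>x \<alpha>y \<beta> r x0 y0 z0 P + weakly_convex_prox X Y P f gx \<rho> r Lx Ly
  for X :: "'x::euclidean_space set" and Y :: "'y::euclidean_space set"
    and gx :: "'x \<Rightarrow> 'y \<Rightarrow> 'xi \<Rightarrow> 'x" and gy :: "'x \<Rightarrow> 'y \<Rightarrow> 'xi \<Rightarrow> 'y" and s :: "'xi setting"
    and T M :: nat and \<alpha>x \<alpha>y \<beta> r :: real and x0 :: 'x and y0 :: 'y and z0 :: 'x and P :: "'xi measure"
    and f :: "'x \<Rightarrow> 'y \<Rightarrow> 'xi \<Rightarrow> real" and \<rho> Lx Ly :: real +
  fixes Omega :: "'w measure" and \<xi> :: "nat \<Rightarrow> nat \<Rightarrow> nat \<Rightarrow> 'w \<Rightarrow> 'xi" and \<sigma>x :: real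
  assumes Omega: "prob_space Omega"
    and samples_indep: "prob_space.indep_vars Omega (\<lambda>_. P) (\<lambda>(k, \<tau>, i). \<xi> k \<tau> i) UNIV"
    and samples_distr: "\<And>k \<tau> i. distr Omega P (\<xi> k \<tau> i) = P"
    and var_x: "\<And>x y. x \<in> X \<Longrightarrow> y \<in> Y \<Longrightarrow>
        (\<integral>\<^sup>+z. ennreal ((norm (gx x y z - (\<integral>w. gx x y w \<partial>P)))\<^sup>2) \<partial>P) \<le> ennreal (\<sigma>x\<^sup>2)"
    and init: "x0 \<in> X" "y0 \<in> Y"
    and finite_sum: "\<And>ss. s = FiniteSum ss \<Longrightarrow> ss \<noteq> [] \<and> P = measure_pmf (pmf_of_multiset (mset ss))"
    and online: "\<And>B. s = Online B \<Longrightarrow> 1 \<le> B"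
    and T: "1 \<le> T" "T = M"
begin

definition sample where "sample = (\<lambda>(k, \<tau>, i). \<xi> k \<tau> i)"

definition samples where "samples \<omega> = (\<lambda>j. sample j \<omega>)"

definition run where "run \<omega> n = state (samples \<omega>) n"

definition est_err where "est_err S = est_x S - gradF (pos_x S) (pos_y S)"

definition past where "past m = (\<Union>m'<m. batch m')"

definition splice where "splice m a t = (\<lambda>j. if j \<in> past m then a j else t j)"

lemma measurable_sample[measurable]: "sample j \<in> measurable Omega P"
  using samples_indep unfolding sample_def prob_space.indep_vars_def[OF Omega]
  by (auto split: prod.split)

lemma batch_eq_image: "batch m = (\<lambda>i. (m div T, m mod T, i)) ` {..<batch_size m}"
  unfolding batch_def by auto

lemma finite_batch: "finite (batch m)"
  unfolding batch_eq_image by simp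

lemma card_batch: "card (batch m) = batch_size m"
  unfolding batch_eq_image by (subst card_image) (auto simp: inj_on_def)

lemma sum_batch: "(\<Sum>i<batch_size m. F (m div T, m mod T, i)) = (\<Sum>j\<in>batch m. F j)"
  unfolding batch_eq_image by (subst sum.reindex) (auto simp: inj_on_def)

lemma batch_subset_past: "m' < m \<Longrightarrow> batch m' \<subseteq> past m"
  unfolding past_def by auto

lemma past_disjoint_batch: "past m \<inter> batch m = {}"
proof -
  have "m = m'" if "j \<in> batch m" "j \<in> batch m'" for j m'
    using that unfolding batch_def by auto (metis div_mult_mod_eq)
  then show ?thesis unfolding past_def by fastforce
qed

lemma splice_batch: "j \<in> batch m \<Longrightarrow> splice m a t j = t j"
  using past_disjoint_batch by (auto simp: splice_def)

lemma run_in_XY: "pos_x (run \<omega> n) \<in> X" "pos_y (run \<omega> n) \<in> Y"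
  using state_in_XY[OF init] unfolding run_def by auto

lemma measurable_run[measurable]: "(\<lambda>\<omega>. run \<omega> n) \<in> borel_measurable Omega"
  unfolding run_def by (rule measurable_state) (simp add: samples_def)

lemma measurable_gradF[measurable (raw)]:
  assumes "f1 \<in> borel_measurable N" "f2 \<in> borel_measurable N"
  shows "(\<lambda>w. gradF (f1 w) (f2 w)) \<in> borel_measurable N"
proof -
  interpret P: prob_space P by (rule P)
  have "(\<lambda>p. gx (fst (fst p)) (snd (fst p)) (snd p)) \<in> borel_measurable (borel \<Otimes>\<^sub>M P)"
    by (intro measurable_gx borel_measurable_fst_comp borel_measurable_snd_comp measurable_fst measurable_snd)
  then have "(\<lambda>(xy, z). gx (fst xy) (snd xy) z) \<in> borel_measurable (borel \<Otimes>\<^sub>M P)"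
    by (simp add: case_prod_beta')
  then have "(\<lambda>xy. gradF (fst xy) (snd xy)) \<in> borel_measurable borel"
    unfolding gradF_def by (rule P.borel_measurable_lebesgue_integral)
  from measurable_compose[OF borel_measurable_Pair[OF assms] this] show ?thesis by simp
qed

lemma measurable_est_err_run[measurable]: "(\<lambda>\<omega>. est_err (run \<omega> n)) \<in> borel_measurable Omega"
  unfolding est_err_def by measurable

lemma state_splice_batch_eq_run:
  "state (splice m (samples \<omega>) (restrict (samples \<omega>) (batch m))) m = run \<omega> m"
  unfolding run_def
proof (rule state_cong)
  fix m' j assume "m' \<le> m" "j \<in> batch m'"
  then show "splice m (samples \<omega>) (restrict (samples \<omega>) (batch m)) j = samples \<omega> j"
    using batch_subset_past[of m' m] by (cases "m' = m") (auto simp: splice_def)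
qed

lemma pos_state_splice:
  "pos_x (state (splice m (samples \<omega>) t) m) = pos_x (run \<omega> m)"
  "pos_y (state (splice m (samples \<omega>) t) m) = pos_y (run \<omega> m)"
  unfolding run_def using batch_subset_past
  by (intro state_pos_cong; metis splice_def subsetD)+

lemma state_splice_Suc:
  "state (splice (Suc n) (samples \<omega>) t) n = run \<omega> n"
  unfolding run_def using batch_subset_past[of _ "Suc n"]
  by (intro state_cong) (auto simp: splice_def less_Suc_eq_le)

lemma measurable_state_splice:
  "(\<lambda>p. state (splice m (fst p) (snd p)) m) \<in> borel_measurable (PiM (past m) (\<lambda>_. P) \<Otimes>\<^sub>M PiM (batch m) (\<lambda>_. P))"
proof (rule measurable_state)
  fix m' j assume m': "m' \<le> m" and j: "j \<in> batch m'"
  show "(\<lambda>p. splice m (fst p) (snd p) j) \<in> measurable (PiM (past m) (\<lambda>_. P) \<Otimes>\<^sub>M PiM (batch m) (\<lambda>_. P)) P"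
  proof (cases "j \<in> past m")
    case True
    then have e: "(\<lambda>p. splice m (fst p) (snd p) j) = (\<lambda>p. fst p j)" by (auto simp: splice_def)
    show ?thesis
      unfolding e by (rule measurable_compose[OF measurable_fst measurable_component_singleton[where M="\<lambda>_. P", OF True]])
  next
    case False
    then have jm: "j \<in> batch m" using m' j batch_subset_past[of m' m] by (cases "m' = m") auto
    have e: "(\<lambda>p. splice m (fst p) (snd p) j) = (\<lambda>p. snd p j)" using False by (auto simp: splice_def)
    show ?thesis
      unfolding e by (rule measurable_compose[OF measurable_snd measurable_component_singleton[where M="\<lambda>_. P", OF jm]])
  qed
qed

text \<open>
  Since \<open>est_err_eq\<close> holds for every \<open>t\<close>, the estimator error depends on the batch of step \<open>m\<close>
  only through the centred sample mean; this batch is independent of the earlier samples, and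
  integrating it out first leaves the variance of a sample mean.
\<close>

lemma nn_integral_est_err_sq_fresh_batch:
  assumes n: "batch_size m = n" "1 \<le> n"
    and h: "\<And>\<omega>. integrable P (h \<omega>)" "\<And>\<omega>. integrable P (\<lambda>s. (norm (h \<omega> s - (\<integral>s. h \<omega> s \<partial>P)))\<^sup>2)"
    and est_err_eq: "\<And>\<omega> t. est_err (state (splice m (samples \<omega>) t) m)
                         = c \<omega> + (1 / real n) *\<^sub>R (\<Sum>j\<in>batch m. h \<omega> (t j) - (\<integral>s. h \<omega> s \<partial>P))"
  shows "(\<integral>\<^sup>+\<omega>. ennreal ((norm (est_err (run \<omega> m)))\<^sup>2) \<partial>Omega)
       = (\<integral>\<^sup>+\<omega>. ennreal ((norm (c \<omega>))\<^sup>2 + (1 / real n) * (\<integral>s. (norm (h \<omega> s - (\<integral>s. h \<omega> s \<partial>P)))\<^sup>2 \<partial>P)) \<partial>Omega)"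
proof -
  interpret O: prob_space Omega by (rule Omega)
  interpret P: prob_space P by (rule P)
  define Phi where "Phi p = ennreal ((norm (est_err (state (splice m (fst p) (snd p)) m)))\<^sup>2)" for p
  have [measurable]: "Phi \<in> borel_measurable (PiM (past m) (\<lambda>_. P) \<Otimes>\<^sub>M PiM (batch m) (\<lambda>_. P))"
    using measurable_state_splice[of m] unfolding Phi_def est_err_def by measurable
  have splice_restrict: "splice m (restrict a (past m)) t = splice m a t" for a t
    by (auto simp: splice_def)
  have "batch m \<noteq> {}" using card_batch[of m] n by auto
  then have "(\<integral>\<^sup>+\<omega>. Phi (restrict (samples \<omega>) (past m), restrict (samples \<omega>) (batch m)) \<partial>Omega)
      = (\<integral>\<^sup>+\<omega>. (\<integral>\<^sup>+t. Phi (restrict (samples \<omega>) (past m), t) \<partial>PiM (batch m) (\<lambda>_. P)) \<partial>Omega)"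
    unfolding samples_def
    by (intro O.nn_integral_indep_vars_split[where I=UNIV])
      (use samples_indep past_disjoint_batch P in \<open>auto simp: sample_def samples_distr split: prod.split\<close>)
  also have "\<dots> = (\<integral>\<^sup>+\<omega>. ennreal ((norm (c \<omega>))\<^sup>2 + (1 / real n) * (\<integral>s. (norm (h \<omega> s - (\<integral>s. h \<omega> s \<partial>P)))\<^sup>2 \<partial>P)) \<partial>Omega)"
  proof (rule nn_integral_cong)
    fix \<omega>
    show "(\<integral>\<^sup>+t. Phi (restrict (samples \<omega>) (past m), t) \<partial>PiM (batch m) (\<lambda>_. P))
        = ennreal ((norm (c \<omega>))\<^sup>2 + (1 / real n) * (\<integral>s. (norm (h \<omega> s - (\<integral>s. h \<omega> s \<partial>P)))\<^sup>2 \<partial>P))"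
      unfolding Phi_def fst_conv snd_conv splice_restrict est_err_eq
      by (rule P.nn_integral_norm_sq_add_sample_mean[OF h(1) h(2) finite_batch]) (use card_batch n in auto)
  qed
  finally show ?thesis
    by (simp add: Phi_def splice_restrict state_splice_batch_eq_run)
qed

definition mean where "mean g = (\<integral>\<^sup>+\<omega>. ennreal (g \<omega>) \<partial>Omega)"

definition sq_err where "sq_err n \<omega> = (norm (est_err (run \<omega> n)))\<^sup>2"

definition sq_dx where "sq_dx n \<omega> = (norm (pos_x (run \<omega> (Suc n)) - pos_x (run \<omega> n)))\<^sup>2"

definition sq_dy where "sq_dy n \<omega> = (norm (pos_y (run \<omega> n) - pos_y (run \<omega> (Suc n))))\<^sup>2"

definition sq_gap where "sq_gap n \<omega> = (norm (pos_x (run \<omega> (Suc n)) - pos_z (run \<omega> n)))\<^sup>2"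

definition drift where "drift n \<omega> = 2 * Lx\<^sup>2 * sq_dx n \<omega> + 2 * Ly\<^sup>2 * sq_dy n \<omega>"

definition C_sigma where "C_sigma = (case s of Online B \<Rightarrow> \<sigma>x\<^sup>2 / real B | FiniteSum _ \<Rightarrow> 0)"

lemma measurable_sq[measurable]:
  "sq_err n \<in> borel_measurable Omega" "sq_dx n \<in> borel_measurable Omega"
  "sq_dy n \<in> borel_measurable Omega" "sq_gap n \<in> borel_measurable Omega"
  unfolding sq_err_def[abs_def] sq_dx_def[abs_def] sq_dy_def[abs_def] sq_gap_def[abs_def] by measurable

lemma drift_nonneg: "0 \<le> drift n \<omega>"
  by (simp add: drift_def sq_dx_def sq_dy_def)

lemma C_sigma_nonneg: "0 \<le> C_sigma"
  unfolding C_sigma_def by (auto split: setting.split)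

lemma mean_add_mult:
  assumes [measurable]: "g \<in> borel_measurable Omega" "h \<in> borel_measurable Omega"
    and "0 \<le> p" "0 \<le> q" "\<And>\<omega>. 0 \<le> g \<omega>" "\<And>\<omega>. 0 \<le> h \<omega>"
  shows "mean (\<lambda>\<omega>. p * g \<omega> + q * h \<omega>) = ennreal p * mean g + ennreal q * mean h"
proof -
  have "(\<lambda>\<omega>. ennreal (p * g \<omega> + q * h \<omega>)) = (\<lambda>\<omega>. ennreal p * ennreal (g \<omega>) + ennreal q * ennreal (h \<omega>))"
    by (intro ext ennreal_mult_add_mult) (use assms in auto)
  then show ?thesis unfolding mean_def by (simp add: nn_integral_add nn_integral_cmult)
qed

lemma mean_drift: "mean (drift n) = ennreal (2 * Lx\<^sup>2) * mean (sq_dx n) + ennreal (2 * Ly\<^sup>2) * mean (sq_dy n)"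
  unfolding drift_def[abs_def] by (rule mean_add_mult) (auto simp: sq_dx_def sq_dy_def)

lemma variance_gx_le:
  assumes "x \<in> X" "y \<in> Y"
  shows "integrable P (\<lambda>s. (norm (gx x y s - (\<integral>s. gx x y s \<partial>P)))\<^sup>2)"
    and "(\<integral>s. (norm (gx x y s - (\<integral>s. gx x y s \<partial>P)))\<^sup>2 \<partial>P) \<le> \<sigma>x\<^sup>2"
proof -
  interpret P: prob_space P by (rule P)
  have "integrable P (\<lambda>s. gx x y s - (\<integral>s. gx x y s \<partial>P))" using integrable_gx[OF assms] by auto
  then show int: "integrable P (\<lambda>s. (norm (gx x y s - (\<integral>s. gx x y s \<partial>P)))\<^sup>2)"
    using var_x[OF assms]
    by (intro prob_space.integrable_norm_sq_if_nn_integral_finite[OF P]) (auto simp: top_unique intro: le_less_trans)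
  show "(\<integral>s. (norm (gx x y s - (\<integral>s. gx x y s \<partial>P)))\<^sup>2 \<partial>P) \<le> \<sigma>x\<^sup>2"
    using var_x[OF assms] nn_integral_eq_integral[OF int] by (simp add: ennreal_le_iff)
qed

lemma est_err_splice_epoch_start_online:
  fixes \<omega> :: 'w
  assumes online_B: "s = Online B" and m: "m mod T = 0"
  defines "h \<equiv> gx (pos_x (run \<omega> m)) (pos_y (run \<omega> m))"
  shows "est_err (state (splice m (samples \<omega>) t) m) = 0 + (1 / real B) *\<^sub>R (\<Sum>j\<in>batch m. h (t j) - (\<integral>s. h s \<partial>P))"
proof -
  have B: "1 \<le> B" using online online_B by auto
  have size: "batch_size m = B" unfolding batch_size_def init_batch_size_def using m online_B by simp
  have init_est_online: "init_est s g smp x y = (1 / real B) *\<^sub>R (\<Sum>i<B. g x y (smp i))" for g smp x y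
    unfolding init_est_def online_B by simp
  have "(m div T, 0, i) \<in> batch m" if "i < B" for i
    using that m size by (auto simp: batch_def)
  then have "est_x (state (splice m (samples \<omega>) t) m) = (1 / real B) *\<^sub>R (\<Sum>i<B. h (t (m div T, m mod T, i)))"
    using state_est_x_epoch_start[OF m] m
    by (simp add: init_est_online pos_state_splice h_def splice_batch)
  then have "est_err (state (splice m (samples \<omega>) t) m)
      = (1 / real B) *\<^sub>R (\<Sum>i<B. h (t (m div T, m mod T, i))) - (\<integral>s. h s \<partial>P)"
    by (simp add: est_err_def pos_state_splice h_def gradF_def)
  also have "\<dots> = (1 / real B) *\<^sub>R (\<Sum>i<B. h (t (m div T, m mod T, i)) - (\<integral>s. h s \<partial>P))"
    by (rule sample_mean_minus[OF B])
  also have "\<dots> = (1 / real B) *\<^sub>R (\<Sum>j\<in>batch m. h (t j) - (\<integral>s. h s \<partial>P))"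
    using sum_batch[of "\<lambda>j. h (t j) - (\<integral>s. h s \<partial>P)" m] size by simp
  finally show ?thesis by simp
qed

lemma mean_sq_err_epoch_start_online:
  assumes online_B: "s = Online B" and m: "m mod T = 0"
  shows "mean (sq_err m) \<le> ennreal (\<sigma>x\<^sup>2 / real B)"
proof -
  interpret O: prob_space Omega by (rule Omega)
  have B: "1 \<le> B" using online online_B by auto
  have size: "batch_size m = B" unfolding batch_size_def init_batch_size_def using m online_B by simp
  define h where "h \<omega> = gx (pos_x (run \<omega> m)) (pos_y (run \<omega> m))" for \<omega>
  have "mean (sq_err m)
      = (\<integral>\<^sup>+\<omega>. ennreal ((norm (0::'x))\<^sup>2 + (1 / real B) * (\<integral>s. (norm (h \<omega> s - (\<integral>s. h \<omega> s \<partial>P)))\<^sup>2 \<partial>P)) \<partial>Omega)"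
    unfolding mean_def sq_err_def
    using est_err_splice_epoch_start_online[OF online_B m]
    by (intro nn_integral_est_err_sq_fresh_batch[OF size B])
      (auto simp: h_def intro: integrable_gx variance_gx_le(1) run_in_XY)
  also have "\<dots> \<le> (\<integral>\<^sup>+\<omega>. ennreal (\<sigma>x\<^sup>2 / real B) \<partial>Omega)"
    using variance_gx_le(2)[OF run_in_XY] B
    by (intro nn_integral_mono ennreal_leI) (auto simp: h_def divide_right_mono)
  finally show ?thesis by (simp add: O.emeasure_space_1)
qed

lemma est_err_epoch_start_finite_sum:
  assumes sF: "s = FiniteSum ss" and m: "m mod T = 0"
  shows "est_err (state t m) = 0"
proof -
  have ss: "ss \<noteq> []" and P_eq: "P = measure_pmf (pmf_of_multiset (mset ss))" using finite_sum[OF sF] by auto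
  define x' where "x' = pos_x (state t m)"
  define y' where "y' = pos_y (state t m)"
  have "est_x (state t m) = (1 / real (length ss)) *\<^sub>R sum_list (map (gx x' y') ss)"
    using state_est_x_epoch_start[OF m, of t] by (simp add: x'_def y'_def init_est_def sF)
  also have "\<dots> = gradF x' y'"
    unfolding gradF_def by (subst P_eq) (rule integral_pmf_of_multiset_mset[OF ss, symmetric])
  finally show ?thesis by (simp add: est_err_def x'_def y'_def)
qed

lemma mean_sq_err_epoch_start: "mean (sq_err (k * T)) \<le> ennreal C_sigma"
proof (cases s)
  case (Online B)
  then show ?thesis unfolding C_sigma_def using mean_sq_err_epoch_start_online[OF Online, of "k * T"] by simp
next
  case (FiniteSum ss)
  have "est_err (state t (k * T)) = 0" for t by (rule est_err_epoch_start_finite_sum[OF FiniteSum]) simp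
  then have "sq_err (k * T) \<omega> = 0" for \<omega> by (simp add: sq_err_def run_def)
  then show ?thesis by (simp add: mean_def)
qed

definition gx_increment where
  "gx_increment n \<omega> = (\<lambda>s. gx (pos_x (run \<omega> (Suc n))) (pos_y (run \<omega> (Suc n))) s - gx (pos_x (run \<omega> n)) (pos_y (run \<omega> n)) s)"

lemma integrable_gx_increment: "integrable P (gx_increment n \<omega>)"
  and integral_gx_increment: "(\<integral>s. gx_increment n \<omega> s \<partial>P)
     = gradF (pos_x (run \<omega> (Suc n))) (pos_y (run \<omega> (Suc n))) - gradF (pos_x (run \<omega> n)) (pos_y (run \<omega> n))"
  using integrable_gx[OF run_in_XY[of \<omega> "Suc n"]] integrable_gx[OF run_in_XY[of \<omega> n]]
  by (simp_all add: gx_increment_def gradF_def)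

lemma variance_gx_increment_le:
  "integrable P (\<lambda>s. (norm (gx_increment n \<omega> s - (\<integral>s. gx_increment n \<omega> s \<partial>P)))\<^sup>2)"
  "(\<integral>s. (norm (gx_increment n \<omega> s - (\<integral>s. gx_increment n \<omega> s \<partial>P)))\<^sup>2 \<partial>P) \<le> drift n \<omega>"
proof -
  let ?h = "gx_increment n \<omega>"
  have sq: "(\<integral>\<^sup>+s. ennreal ((norm (?h s))\<^sup>2) \<partial>P) \<le> ennreal (drift n \<omega>)"
    using nn_integral_gx_increment_sq_le[OF run_in_XY(1)[of \<omega> n] run_in_XY(1)[of \<omega> "Suc n"]
        run_in_XY(2)[of \<omega> n] run_in_XY(2)[of \<omega> "Suc n"]]
    by (simp add: gx_increment_def drift_def sq_dx_def sq_dy_def norm_minus_commute)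
  then have sq_int: "integrable P (\<lambda>s. (norm (?h s))\<^sup>2)"
    by (intro prob_space.integrable_norm_sq_if_nn_integral_finite[OF P integrable_gx_increment])
      (auto simp: top_unique intro: le_less_trans)
  show "integrable P (\<lambda>s. (norm (?h s - (\<integral>s. ?h s \<partial>P)))\<^sup>2)"
    by (rule prob_space.integral_norm_sq_centered(1)[OF P integrable_gx_increment sq_int])
  have "ennreal (\<integral>s. (norm (?h s))\<^sup>2 \<partial>P) \<le> ennreal (drift n \<omega>)"
    using sq nn_integral_eq_integral[OF sq_int] by simp
  then have "(\<integral>s. (norm (?h s))\<^sup>2 \<partial>P) \<le> drift n \<omega>"
    by (subst (asm) ennreal_le_iff) (auto simp: drift_nonneg)
  then show "(\<integral>s. (norm (?h s - (\<integral>s. ?h s \<partial>P)))\<^sup>2 \<partial>P) \<le> drift n \<omega>"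
    using prob_space.integral_norm_sq_centered(2)[OF P integrable_gx_increment sq_int]
      zero_le_power2[of "norm (\<integral>s. ?h s \<partial>P)"] by linarith
qed

lemma est_err_splice_Suc:
  assumes within_epoch: "Suc n mod T \<noteq> 0"
  shows "est_err (state (splice (Suc n) (samples \<omega>) t) (Suc n))
    = est_err (run \<omega> n) + (1 / real M) *\<^sub>R
        (\<Sum>j\<in>batch (Suc n). gx_increment n \<omega> (t j) - (\<integral>s. gx_increment n \<omega> s \<partial>P))"
proof -
  let ?h = "gx_increment n \<omega>"
  have M: "1 \<le> M" using T by simp
  have size: "batch_size (Suc n) = M" using within_epoch by (simp add: batch_size_def)
  have "(Suc n div T, Suc n mod T, i) \<in> batch (Suc n)" if "i < M" for i
    using that size by (auto simp: batch_def)
  then have "est_x (state (splice (Suc n) (samples \<omega>) t) (Suc n))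
      = (1 / real M) *\<^sub>R (\<Sum>i<M. ?h (t (Suc n div T, Suc n mod T, i))) + est_x (run \<omega> n)"
    using state_est_x_Suc[OF within_epoch]
    by (simp add: pos_state_splice state_splice_Suc splice_batch gx_increment_def)
  then have "est_err (state (splice (Suc n) (samples \<omega>) t) (Suc n))
      = est_err (run \<omega> n) + ((1 / real M) *\<^sub>R (\<Sum>i<M. ?h (t (Suc n div T, Suc n mod T, i))) - (\<integral>s. ?h s \<partial>P))"
    by (simp add: est_err_def pos_state_splice integral_gx_increment)
  also have "\<dots> = est_err (run \<omega> n) + (1 / real M) *\<^sub>R (\<Sum>i<M. ?h (t (Suc n div T, Suc n mod T, i)) - (\<integral>s. ?h s \<partial>P))"
    by (simp only: sample_mean_minus[OF M])
  also have "\<dots> = est_err (run \<omega> n) + (1 / real M) *\<^sub>R (\<Sum>j\<in>batch (Suc n). ?h (t j) - (\<integral>s. ?h s \<partial>P))"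
    using sum_batch[of "\<lambda>j. ?h (t j) - (\<integral>s. ?h s \<partial>P)" "Suc n"] size by simp
  finally show ?thesis .
qed

lemma mean_sq_err_Suc:
  assumes within_epoch: "Suc n mod T \<noteq> 0"
  shows "mean (sq_err (Suc n)) \<le> mean (sq_err n) + ennreal (1 / real M) * mean (drift n)"
proof -
  have M: "1 \<le> M" using T by simp
  have size: "batch_size (Suc n) = M" using within_epoch by (simp add: batch_size_def)
  let ?var = "\<lambda>\<omega>. \<integral>s. (norm (gx_increment n \<omega> s - (\<integral>s. gx_increment n \<omega> s \<partial>P)))\<^sup>2 \<partial>P"
  have "mean (sq_err (Suc n)) = (\<integral>\<^sup>+\<omega>. ennreal (sq_err n \<omega> + (1 / real M) * ?var \<omega>) \<partial>Omega)"
    unfolding mean_def sq_err_def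
    by (intro nn_integral_est_err_sq_fresh_batch[OF size M] integrable_gx_increment
        variance_gx_increment_le(1) est_err_splice_Suc[OF within_epoch])
  also have "\<dots> \<le> (\<integral>\<^sup>+\<omega>. ennreal (sq_err n \<omega>) + ennreal (1 / real M) * ennreal (drift n \<omega>) \<partial>Omega)"
  proof (rule nn_integral_mono)
    fix \<omega>
    have "ennreal (sq_err n \<omega> + (1 / real M) * ?var \<omega>) \<le> ennreal (sq_err n \<omega> + (1 / real M) * drift n \<omega>)"
      using variance_gx_increment_le(2)[of n \<omega>]
      by (intro ennreal_leI add_left_mono mult_left_mono) (auto simp: divide_right_mono)
    also have "\<dots> = ennreal (sq_err n \<omega>) + ennreal (1 / real M) * ennreal (drift n \<omega>)"
      using drift_nonneg[of n \<omega>] by (simp add: sq_err_def ennreal_plus ennreal_mult[symmetric])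
    finally show "ennreal (sq_err n \<omega> + (1 / real M) * ?var \<omega>)
        \<le> ennreal (sq_err n \<omega>) + ennreal (1 / real M) * ennreal (drift n \<omega>)" .
  qed
  also have "\<dots> = mean (sq_err n) + ennreal (1 / real M) * mean (drift n)"
    unfolding mean_def drift_def by (simp add: nn_integral_add nn_integral_cmult)
  finally show ?thesis .
qed

lemma mean_sq_err_within_epoch:
  assumes "\<tau> < T"
  shows "mean (sq_err (k * T + \<tau>)) \<le> ennreal C_sigma + ennreal (1 / real M) * (\<Sum>j<\<tau>. mean (drift (k * T + j)))"
  using assms
proof (induction \<tau>)
  case 0
  then show ?case using mean_sq_err_epoch_start[of k] by simp
next
  case (Suc \<tau>)
  have "Suc (k * T + \<tau>) mod T = Suc \<tau>" using Suc.prems by (simp add: mod_add_left_eq[symmetric] add.commute)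
  then have "mean (sq_err (Suc (k * T + \<tau>))) \<le> mean (sq_err (k * T + \<tau>)) + ennreal (1 / real M) * mean (drift (k * T + \<tau>))"
    by (intro mean_sq_err_Suc) simp
  also have "\<dots> \<le> ennreal C_sigma + ennreal (1 / real M) * (\<Sum>j<\<tau>. mean (drift (k * T + j)))
      + ennreal (1 / real M) * mean (drift (k * T + \<tau>))"
    using Suc by (intro add_right_mono) auto
  also have "\<dots> = ennreal C_sigma + ennreal (1 / real M) * (\<Sum>j<Suc \<tau>. mean (drift (k * T + j)))"
    by (simp add: distrib_left add.assoc)
  finally show ?case by simp
qed

text \<open>With \<open>T = M\<close> the \<open>T\<close> copies of the factor \<open>1/M\<close> cancel.\<close>

lemma sum_mean_sq_err_epoch:
  "(\<Sum>\<tau><T. mean (sq_err (k * T + \<tau>))) \<le> ennreal (real T * C_sigma) + (\<Sum>j<T. mean (drift (k * T + j)))"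
proof -
  have "(\<Sum>\<tau><T. mean (sq_err (k * T + \<tau>)))
      \<le> (\<Sum>\<tau><T. ennreal C_sigma + ennreal (1 / real M) * (\<Sum>j<T. mean (drift (k * T + j))))"
  proof (rule sum_mono)
    fix \<tau> assume \<tau>: "\<tau> \<in> {..<T}"
    have "(\<Sum>j<\<tau>. mean (drift (k * T + j))) \<le> (\<Sum>j<T. mean (drift (k * T + j)))"
      using \<tau> by (intro sum_mono2) auto
    then show "mean (sq_err (k * T + \<tau>)) \<le> ennreal C_sigma + ennreal (1 / real M) * (\<Sum>j<T. mean (drift (k * T + j)))"
      using mean_sq_err_within_epoch[of \<tau> k] \<tau> by (meson add_left_mono mult_left_mono order_trans zero_le lessThan_iff)
  qed
  also have "\<dots> = of_nat T * ennreal C_sigma + (of_nat T * ennreal (1 / real M)) * (\<Sum>j<T. mean (drift (k * T + j)))"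
    by (simp add: distrib_left mult.assoc)
  also have "of_nat T * ennreal (1 / real M) = 1"
    using T by (simp add: ennreal_mult[symmetric] ennreal_of_nat_eq_real_of_nat)
  also have "of_nat T * ennreal C_sigma = ennreal (real T * C_sigma)"
    using C_sigma_nonneg by (simp add: ennreal_mult ennreal_of_nat_eq_real_of_nat)
  finally show ?thesis by simp
qed

section \<open>The gradient of the envelope along the run\<close>

definition sq_grad where
  "sq_grad n \<omega> = (norm (grad (\<lambda>z. d_r X P f r (pos_y (run \<omega> (Suc n))) z) (pos_x (run \<omega> (Suc n)))))\<^sup>2"

lemma sq_grad_le:
  assumes \<alpha>: "0 < \<alpha>x" and r: "2 * \<rho> \<le> r"
  shows "sq_grad n \<omega> \<le> 18 * (1 / \<alpha>x + Lx + r)\<^sup>2 * sq_dx n \<omega> + 12 * r\<^sup>2 * sq_gap n \<omega>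
           + 18 * Ly\<^sup>2 * sq_dy n \<omega> + 18 * sq_err n \<omega>"
proof -
  have "pos_x (run \<omega> (Suc n)) = closest_point X (pos_x (run \<omega> n)
          - \<alpha>x *\<^sub>R (est_x (run \<omega> n) + r *\<^sub>R (pos_x (run \<omega> n) - pos_z (run \<omega> n))))"
    unfolding run_def by (rule state_Suc_pos(1))
  from projected_step_grad_d_r_bound[OF run_in_XY(1,2)[of \<omega> n] run_in_XY(2)[of \<omega> "Suc n"] \<alpha> r this] show ?thesis
    by (simp add: sq_grad_def sq_dx_def sq_dy_def sq_gap_def sq_err_def est_err_def
        power_mult_distrib norm_minus_commute)
qed

lemma mean_sq_grad_le:
  assumes "0 < \<alpha>x" and "2 * \<rho> \<le> r"
  shows "mean (sq_grad n) \<le> ennreal (18 * (1 / \<alpha>x + Lx + r)\<^sup>2) * mean (sq_dx n) + ennreal (12 * r\<^sup>2) * mean (sq_gap n)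
           + ennreal (18 * Ly\<^sup>2) * mean (sq_dy n) + 18 * mean (sq_err n)"
proof -
  have "mean (sq_grad n) \<le> (\<integral>\<^sup>+\<omega>. ennreal (18 * (1 / \<alpha>x + Lx + r)\<^sup>2) * ennreal (sq_dx n \<omega>)
      + ennreal (12 * r\<^sup>2) * ennreal (sq_gap n \<omega>) + ennreal (18 * Ly\<^sup>2) * ennreal (sq_dy n \<omega>)
      + ennreal 18 * ennreal (sq_err n \<omega>) \<partial>Omega)"
    unfolding mean_def
  proof (rule nn_integral_mono)
    fix \<omega>
    show "ennreal (sq_grad n \<omega>) \<le> ennreal (18 * (1 / \<alpha>x + Lx + r)\<^sup>2) * ennreal (sq_dx n \<omega>)
      + ennreal (12 * r\<^sup>2) * ennreal (sq_gap n \<omega>) + ennreal (18 * Ly\<^sup>2) * ennreal (sq_dy n \<omega>)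
      + ennreal 18 * ennreal (sq_err n \<omega>)"
      using ennreal_leI[OF sq_grad_le[OF assms, of n \<omega>]]
      by (subst (asm) ennreal_mult_add_mult4) (auto simp: sq_dx_def sq_dy_def sq_gap_def sq_err_def)
  qed
  also have "\<dots> = ennreal (18 * (1 / \<alpha>x + Lx + r)\<^sup>2) * mean (sq_dx n) + ennreal (12 * r\<^sup>2) * mean (sq_gap n)
           + ennreal (18 * Ly\<^sup>2) * mean (sq_dy n) + 18 * mean (sq_err n)"
    unfolding mean_def by (simp add: nn_integral_add nn_integral_cmult)
  finally show ?thesis .
qed

lemma sum_mean_sq_grad_epoch_le:
  assumes \<alpha>: "0 < \<alpha>x" and r: "2 * \<rho> \<le> r"
    and c1: "18 * (1 / \<alpha>x + Lx + r)\<^sup>2 + 18 * (2 * Lx\<^sup>2) \<le> c1" and c2: "18 * Ly\<^sup>2 + 18 * (2 * Ly\<^sup>2) \<le> c2"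
  shows "(\<Sum>\<tau><T. mean (sq_grad (k * T + \<tau>)))
     \<le> (\<Sum>\<tau><T. ennreal c1 * mean (sq_dx (k * T + \<tau>)) + ennreal c2 * mean (sq_dy (k * T + \<tau>))
              + ennreal (12 * r\<^sup>2) * mean (sq_gap (k * T + \<tau>)))
        + 18 * ennreal (real T * C_sigma)"
proof -
  define a1 where "a1 = 18 * (1 / \<alpha>x + Lx + r)\<^sup>2"
  define A where "A n = ennreal a1 * mean (sq_dx n) + ennreal (12 * r\<^sup>2) * mean (sq_gap n)
    + ennreal (18 * Ly\<^sup>2) * mean (sq_dy n)" for n
  have "(\<Sum>\<tau><T. mean (sq_grad (k * T + \<tau>))) \<le> (\<Sum>\<tau><T. A (k * T + \<tau>) + 18 * mean (sq_err (k * T + \<tau>)))"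
    by (intro sum_mono) (use mean_sq_grad_le[OF \<alpha> r] in \<open>simp add: A_def a1_def\<close>)
  also have "\<dots> = (\<Sum>\<tau><T. A (k * T + \<tau>)) + 18 * (\<Sum>\<tau><T. mean (sq_err (k * T + \<tau>)))"
    by (simp add: sum.distrib sum_distrib_left)
  also have "\<dots> \<le> (\<Sum>\<tau><T. A (k * T + \<tau>)) + 18 * (ennreal (real T * C_sigma) + (\<Sum>j<T. mean (drift (k * T + j))))"
    by (intro add_left_mono mult_left_mono sum_mean_sq_err_epoch) auto
  also have "\<dots> = (\<Sum>\<tau><T. A (k * T + \<tau>) + 18 * mean (drift (k * T + \<tau>))) + 18 * ennreal (real T * C_sigma)"
    by (simp add: sum.distrib sum_distrib_left distrib_left algebra_simps)
  also have "\<dots> \<le> (\<Sum>\<tau><T. ennreal c1 * mean (sq_dx (k * T + \<tau>)) + ennreal c2 * mean (sq_dy (k * T + \<tau>))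
              + ennreal (12 * r\<^sup>2) * mean (sq_gap (k * T + \<tau>)))
        + 18 * ennreal (real T * C_sigma)"
  proof (intro add_right_mono sum_mono)
    fix \<tau>
    define n where "n = k * T + \<tau>"
    have "A n + 18 * mean (drift n)
        = (ennreal a1 * mean (sq_dx n) + 18 * (ennreal (2 * Lx\<^sup>2) * mean (sq_dx n)))
          + (ennreal (18 * Ly\<^sup>2) * mean (sq_dy n) + 18 * (ennreal (2 * Ly\<^sup>2) * mean (sq_dy n)))
          + ennreal (12 * r\<^sup>2) * mean (sq_gap n)"
      unfolding A_def mean_drift by (simp add: distrib_left algebra_simps)
    also have "\<dots> \<le> ennreal c1 * mean (sq_dx n) + ennreal c2 * mean (sq_dy n) + ennreal (12 * r\<^sup>2) * mean (sq_gap n)"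
      by (intro add_mono ennreal_mult_add_numeral_mult_le order_refl) (use c1 c2 in \<open>auto simp: a1_def\<close>)
    finally show "A (k * T + \<tau>) + 18 * mean (drift (k * T + \<tau>))
        \<le> ennreal c1 * mean (sq_dx (k * T + \<tau>)) + ennreal c2 * mean (sq_dy (k * T + \<tau>))
          + ennreal (12 * r\<^sup>2) * mean (sq_gap (k * T + \<tau>))"
      by (simp add: n_def)
  qed
  finally show ?thesis .
qed

lemma sum_mean_sq_grad_le:
  assumes \<alpha>: "0 < \<alpha>x" and r: "2 * \<rho> \<le> r"
    and c1: "18 * (1 / \<alpha>x + Lx + r)\<^sup>2 + 18 * (2 * Lx\<^sup>2) \<le> c1" and c2: "18 * Ly\<^sup>2 + 18 * (2 * Ly\<^sup>2) \<le> c2"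
  shows "(\<Sum>k<K. \<Sum>\<tau><T. mean (sq_grad (k * T + \<tau>)))
     \<le> ennreal c1 * (\<Sum>k<K. \<Sum>\<tau><T. mean (sq_dx (k * T + \<tau>))) + ennreal c2 * (\<Sum>k<K. \<Sum>\<tau><T. mean (sq_dy (k * T + \<tau>)))
       + ennreal (12 * r\<^sup>2) * (\<Sum>k<K. \<Sum>\<tau><T. mean (sq_gap (k * T + \<tau>))) + ennreal (real K * real T * (18 * C_sigma))"
proof -
  have "(\<Sum>k<K. \<Sum>\<tau><T. mean (sq_grad (k * T + \<tau>)))
     \<le> (\<Sum>k<K. (\<Sum>\<tau><T. ennreal c1 * mean (sq_dx (k * T + \<tau>)) + ennreal c2 * mean (sq_dy (k * T + \<tau>))
          + ennreal (12 * r\<^sup>2) * mean (sq_gap (k * T + \<tau>))) + 18 * ennreal (real T * C_sigma))"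
    by (intro sum_mono sum_mean_sq_grad_epoch_le[OF \<alpha> r c1 c2])
  also have "\<dots> = ennreal c1 * (\<Sum>k<K. \<Sum>\<tau><T. mean (sq_dx (k * T + \<tau>))) + ennreal c2 * (\<Sum>k<K. \<Sum>\<tau><T. mean (sq_dy (k * T + \<tau>)))
       + ennreal (12 * r\<^sup>2) * (\<Sum>k<K. \<Sum>\<tau><T. mean (sq_gap (k * T + \<tau>))) + of_nat K * (18 * ennreal (real T * C_sigma))"
    by (simp add: sum.distrib sum_distrib_left)
  also have "of_nat K * (18 * ennreal (real T * C_sigma)) = ennreal (real K * real T * (18 * C_sigma))"
    using C_sigma_nonneg by (simp add: ennreal_mult ennreal_of_nat_eq_real_of_nat mult_ac)
  finally show ?thesis .
qed

lemma average_mean_sq_grad_le: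
  assumes \<alpha>: "0 < \<alpha>x" and r: "2 * \<rho> \<le> r" and \<alpha>_small: "\<alpha>x * (12 * (r + Lx + 2 * Ly)) \<le> 1"
    and Ly: "2 * Ly \<le> r" and K: "1 \<le> K"
  shows "ennreal (1 / (real K * real T)) * (\<Sum>k<K. \<Sum>\<tau><T. mean (sq_grad (k * T + \<tau>)))
     \<le> ennreal ((15 * r\<^sup>2 + 97 / \<alpha>x\<^sup>2) / (real K * real T)) * (\<Sum>k<K. \<Sum>\<tau><T. mean (sq_dx (k * T + \<tau>)))
       + ennreal (35 * r\<^sup>2 / (real K * real T)) * (\<Sum>k<K. \<Sum>\<tau><T. mean (sq_dy (k * T + \<tau>)))
       + ennreal (12 * r\<^sup>2 / (real K * real T)) * (\<Sum>k<K. \<Sum>\<tau><T. mean (sq_gap (k * T + \<tau>)))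
       + ennreal (61 * C_sigma)"
proof -
  have c1: "18 * (1 / \<alpha>x + Lx + r)\<^sup>2 + 18 * (2 * Lx\<^sup>2) \<le> 15 * r\<^sup>2 + 97 / \<alpha>x\<^sup>2"
    using rho by (intro step_size_coefficient_le[OF \<alpha> L_nonneg _ \<alpha>_small]) simp
  have "Ly\<^sup>2 \<le> (r / 2)\<^sup>2" using Ly L_nonneg by (intro power_mono) auto
  then have "4 * Ly\<^sup>2 \<le> r\<^sup>2" by (simp add: power_divide)
  then have c2: "18 * Ly\<^sup>2 + 18 * (2 * Ly\<^sup>2) \<le> 35 * r\<^sup>2"
    using zero_le_power2[of r] by linarith
  define D where "D = real K * real T"
  have D: "0 < D" using K T by (simp add: D_def)
  have scale: "ennreal (1 / D) * (ennreal b * S) = ennreal (b / D) * S" if "0 \<le> b" for b S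
  proof -
    have "ennreal (1 / D) * (ennreal b * S) = ennreal (1 / D * b) * S"
      using D that by (metis ennreal_mult mult.assoc less_eq_real_def zero_le_divide_1_iff)
    then show ?thesis by simp
  qed
  have last: "ennreal (1 / D) * ennreal (D * (18 * C_sigma)) = ennreal (18 * C_sigma)"
  proof -
    have "1 / D * (D * (18 * C_sigma)) = 18 * C_sigma" using D by simp
    then show ?thesis using D C_sigma_nonneg by (simp add: ennreal_mult[symmetric])
  qed
  have "ennreal (1 / D) * (\<Sum>k<K. \<Sum>\<tau><T. mean (sq_grad (k * T + \<tau>)))
      \<le> ennreal (1 / D) * (ennreal (15 * r\<^sup>2 + 97 / \<alpha>x\<^sup>2) * (\<Sum>k<K. \<Sum>\<tau><T. mean (sq_dx (k * T + \<tau>)))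
          + ennreal (35 * r\<^sup>2) * (\<Sum>k<K. \<Sum>\<tau><T. mean (sq_dy (k * T + \<tau>)))
          + ennreal (12 * r\<^sup>2) * (\<Sum>k<K. \<Sum>\<tau><T. mean (sq_gap (k * T + \<tau>))) + ennreal (D * (18 * C_sigma)))"
    using sum_mean_sq_grad_le[OF \<alpha> r c1 c2] by (intro mult_left_mono) (simp_all add: D_def)
  also have "\<dots> = ennreal ((15 * r\<^sup>2 + 97 / \<alpha>x\<^sup>2) / D) * (\<Sum>k<K. \<Sum>\<tau><T. mean (sq_dx (k * T + \<tau>)))
      + ennreal (35 * r\<^sup>2 / D) * (\<Sum>k<K. \<Sum>\<tau><T. mean (sq_dy (k * T + \<tau>)))
      + ennreal (12 * r\<^sup>2 / D) * (\<Sum>k<K. \<Sum>\<tau><T. mean (sq_gap (k * T + \<tau>))) + ennreal (18 * C_sigma)"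
    unfolding distrib_left last by (subst (1 2 3) scale) simp_all
  also have "ennreal (18 * C_sigma) \<le> ennreal (61 * C_sigma)"
    using C_sigma_nonneg by (intro ennreal_leI) auto
  finally show ?thesis by (simp add: D_def add_left_mono)
qed

end

text \<open>With \<open>Ly = 0\<close> the last quotient below is \<open>0\<close> by division by zero, so the hypothesis forces \<open>Ly > 0\<close>.\<close>

lemma step_size_consequences:
  fixes \<alpha>x r \<rho> Lx Ly :: real
  assumes "0 < \<alpha>x" "0 < r" "0 \<le> \<rho>" "0 \<le> Lx" "0 \<le> Ly"
    and \<alpha>: "\<alpha>x \<le> Min {1 / (12 * (r + Lx + 2 * Ly)), (r - \<rho>)\<^sup>2 / (24 * (r + Lx)\<^sup>2 * (Ly + 1)),
                       (r - (\<rho> + 2 * Ly)) / (2 * Ly * (Lx + r))}"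
  shows "\<alpha>x * (12 * (r + Lx + 2 * Ly)) \<le> 1" and "2 * Ly \<le> r"
proof -
  have \<alpha>1: "\<alpha>x \<le> 1 / (12 * (r + Lx + 2 * Ly))" and \<alpha>3: "\<alpha>x \<le> (r - (\<rho> + 2 * Ly)) / (2 * Ly * (Lx + r))"
    using \<alpha> by (simp_all add: min.assoc)
  show "\<alpha>x * (12 * (r + Lx + 2 * Ly)) \<le> 1"
    using \<alpha>1 assms by (simp add: le_divide_eq)
  show "2 * Ly \<le> r"
  proof (cases "Ly = 0")
    case False
    then have d: "0 < 2 * Ly * (Lx + r)" using assms by simp
    then have "\<alpha>x * (2 * Ly * (Lx + r)) \<le> r - (\<rho> + 2 * Ly)" using \<alpha>3 by (simp add: le_divide_eq)
    moreover have "0 < \<alpha>x * (2 * Ly * (Lx + r))" using d assms by simp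
    ultimately show ?thesis using assms by linarith
  qed (use assms in simp)
qed

theorem lemmaA18:
  fixes X :: "'x::euclidean_space set" and Y :: "'y::euclidean_space set"
    and P :: "'xi measure" and Omega :: "'w measure"
    and f :: "'x \<Rightarrow> 'y \<Rightarrow> 'xi \<Rightarrow> real"
    and gx :: "'x \<Rightarrow> 'y \<Rightarrow> 'xi \<Rightarrow> 'x" and gy :: "'x \<Rightarrow> 'y \<Rightarrow> 'xi \<Rightarrow> 'y"
    and \<xi> :: "nat \<Rightarrow> nat \<Rightarrow> nat \<Rightarrow> 'w \<Rightarrow> 'xi"
    and s :: "'xi setting"
    and ell Lx Ly \<rho> \<sigma>x \<sigma>y Flow :: real
    and K T M :: nat and \<alpha>x \<alpha>y \<beta> r :: real
    and x0 :: 'x and y0 :: 'y and z0 :: 'x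
  defines "S \<equiv> \<lambda>\<omega> n. alg X Y gx gy s (\<lambda>k \<tau> i. \<xi> k \<tau> i \<omega>) T M \<alpha>x \<alpha>y \<beta> r x0 y0 z0 n"
  defines "xk \<equiv> \<lambda>k \<tau> \<omega>. fst (S \<omega> (k * T + \<tau>))"
  defines "yk \<equiv> \<lambda>k \<tau> \<omega>. fst (snd (S \<omega> (k * T + \<tau>)))"
  defines "zk \<equiv> \<lambda>k \<tau> \<omega>. fst (snd (snd (S \<omega> (k * T + \<tau>))))"
  defines "C\<sigma>x \<equiv> (case s of Online B \<Rightarrow> \<sigma>x\<^sup>2 / real B | FiniteSum _ \<Rightarrow> 0)"
  assumes X: "X \<noteq> {}" "closed X" "convex X"
    and Y: "Y \<noteq> {}" "closed Y" "convex Y" "compact Y"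
    \<comment> \<open>distribution and sampling\<close>
    and P: "prob_space P"
    and setting: "case s of Online B \<Rightarrow> B \<ge> 1
                   | FiniteSum ss \<Rightarrow> ss \<noteq> [] \<and> P = measure_pmf (pmf_of_multiset (mset ss))"
    and Omega: "prob_space Omega"
    and samples_indep: "prob_space.indep_vars Omega (\<lambda>_. P) (\<lambda>(k, \<tau>, i). \<xi> k \<tau> i) UNIV"
    and samples_distr: "\<And>k \<tau> i. distr Omega P (\<xi> k \<tau> i) = P"
    \<comment> \<open>gradients and measurability\<close>
    and grad_x: "\<And>x y z. ((\<lambda>x'. f x' y z) has_derivative (\<lambda>h. gx x y z \<bullet> h)) (at x)"
    and grad_y: "\<And>x y z. ((\<lambda>y'. f x y' z) has_derivative (\<lambda>h. gy x y z \<bullet> h)) (at y)"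
    and meas_f: "\<And>x y. f x y \<in> borel_measurable P"
    and meas_gx: "(\<lambda>(x, y, z). gx x y z) \<in> borel_measurable (borel \<Otimes>\<^sub>M (borel \<Otimes>\<^sub>M P))"
    and meas_gy: "(\<lambda>(x, y, z). gy x y z) \<in> borel_measurable (borel \<Otimes>\<^sub>M (borel \<Otimes>\<^sub>M P))"
    and int_f: "\<And>x y. x \<in> X \<Longrightarrow> y \<in> Y \<Longrightarrow> integrable P (f x y)"
    \<comment> \<open>Smoothness Assumption (ii)\<close>
    and lip_f: "\<And>x1 x2 y1 y2. x1 \<in> X \<Longrightarrow> x2 \<in> X \<Longrightarrow> y1 \<in> Y \<Longrightarrow> y2 \<in> Y \<Longrightarrow>
        (\<integral>\<^sup>+z. ennreal \<bar>f x1 y1 z - f x2 y2 z\<bar> \<partial>P) \<le> ennreal (ell * (norm (x1 - x2) + norm (y1 - y2)))"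
    \<comment> \<open>Smoothness Assumption (iii)\<close>
    and lip_gx_x: "\<And>x1 x2 y. x1 \<in> X \<Longrightarrow> x2 \<in> X \<Longrightarrow> y \<in> Y \<Longrightarrow>
        (\<integral>\<^sup>+z. ennreal ((norm (gx x1 y z - gx x2 y z))\<^sup>2) \<partial>P) \<le> ennreal (Lx\<^sup>2 * (norm (x1 - x2))\<^sup>2)"
    and lip_gx_y: "\<And>x y1 y2. x \<in> X \<Longrightarrow> y1 \<in> Y \<Longrightarrow> y2 \<in> Y \<Longrightarrow>
        (\<integral>\<^sup>+z. ennreal ((norm (gx x y1 z - gx x y2 z))\<^sup>2) \<partial>P) \<le> ennreal (Ly\<^sup>2 * (norm (y1 - y2))\<^sup>2)"
    and lip_gy: "\<And>x1 x2 y1 y2. x1 \<in> X \<Longrightarrow> x2 \<in> X \<Longrightarrow> y1 \<in> Y \<Longrightarrow> y2 \<in> Y \<Longrightarrow>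
        (\<integral>\<^sup>+z. ennreal ((norm (gy x1 y1 z - gy x2 y2 z))\<^sup>2) \<partial>P)
          \<le> ennreal (Ly\<^sup>2 * ((norm (x1 - x2))\<^sup>2 + (norm (y1 - y2))\<^sup>2))"
    \<comment> \<open>Smoothness Assumption (iv)\<close>
    and weakly_convex: "\<And>y. y \<in> Y \<Longrightarrow> convex_on X (\<lambda>x. Fexp P f x y + \<rho> / 2 * (norm x)\<^sup>2)"
    \<comment> \<open>Smoothness Assumption (v)\<close>
    and unbiased_x: "\<And>x y. x \<in> X \<Longrightarrow> y \<in> Y \<Longrightarrow> integrable P (gx x y) \<and>
        ((\<lambda>x'. Fexp P f x' y) has_derivative (\<lambda>h. (\<integral>z. gx x y z \<partial>P) \<bullet> h)) (at x within X)"
    and unbiased_y: "\<And>x y. x \<in> X \<Longrightarrow> y \<in> Y \<Longrightarrow> integrable P (gy x y) \<and>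
        ((\<lambda>y'. Fexp P f x y') has_derivative (\<lambda>h. (\<integral>z. gy x y z \<partial>P) \<bullet> h)) (at y within Y)"
    and var_x: "\<And>x y. x \<in> X \<Longrightarrow> y \<in> Y \<Longrightarrow>
        (\<integral>\<^sup>+z. ennreal ((norm (gx x y z - (\<integral>w. gx x y w \<partial>P)))\<^sup>2) \<partial>P) \<le> ennreal (\<sigma>x\<^sup>2)"
    and var_y: "\<And>x y. x \<in> X \<Longrightarrow> y \<in> Y \<Longrightarrow>
        (\<integral>\<^sup>+z. ennreal ((norm (gy x y z - (\<integral>w. gy x y w \<partial>P)))\<^sup>2) \<partial>P) \<le> ennreal (\<sigma>y\<^sup>2)"
    \<comment> \<open>Smoothness Assumption (vi)\<close>
    and lower: "\<exists>y\<in>Y. \<forall>x\<in>X. Flow \<le> Fexp P f x y"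
    and nonneg: "0 \<le> ell" "0 \<le> Lx" "0 \<le> Ly" "0 \<le> \<rho>" "0 \<le> \<sigma>x" "0 \<le> \<sigma>y"
    \<comment> \<open>algorithm parameters\<close>
    and KTM: "K \<ge> 1" "T \<ge> 1" "T = M"
    and params: "0 < \<alpha>x" "0 < \<alpha>y" "0 < \<beta>" "0 < r"
    and init: "x0 \<in> X" "y0 \<in> Y"
    and r_ge: "r \<ge> max (2 * \<rho>) (Ly + \<rho>)"
    and alpha_lo: "24 * (Ly + 1) / (r - \<rho>)\<^sup>2 \<le> \<alpha>x"
    and alpha_hi: "\<alpha>x \<le> Min {1 / (12 * (r + Lx + 2 * Ly)),
                              (r - \<rho>)\<^sup>2 / (24 * (r + Lx)\<^sup>2 * (Ly + 1)),
                              (r - (\<rho> + 2 * Ly)) / (2 * Ly * (Lx + r))}"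
  shows "ennreal (1 / (real K * real T)) *
           (\<Sum>k<K. \<Sum>\<tau><T. \<integral>\<^sup>+\<omega>. ennreal ((norm (grad (\<lambda>z. d_r X P f r (yk k (Suc \<tau>) \<omega>) z)
                                                    (xk k (Suc \<tau>) \<omega>)))\<^sup>2) \<partial>Omega)
         \<le> ennreal ((15 * r\<^sup>2 + 97 / \<alpha>x\<^sup>2) / (real K * real T)) *
             (\<Sum>k<K. \<Sum>\<tau><T. \<integral>\<^sup>+\<omega>. ennreal ((norm (xk k (Suc \<tau>) \<omega> - xk k \<tau> \<omega>))\<^sup>2) \<partial>Omega)
           + ennreal (35 * r\<^sup>2 / (real K * real T)) *
             (\<Sum>k<K. \<Sum>\<tau><T. \<integral>\<^sup>+\<omega>. ennreal ((norm (yk k \<tau> \<omega> - yk k (Suc \<tau>) \<omega>))\<^sup>2) \<partial>Omega)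
           + ennreal (12 * r\<^sup>2 / (real K * real T)) *
             (\<Sum>k<K. \<Sum>\<tau><T. \<integral>\<^sup>+\<omega>. ennreal ((norm (xk k (Suc \<tau>) \<omega> - zk k \<tau> \<omega>))\<^sup>2) \<partial>Omega)
           + ennreal (61 * C\<sigma>x)"
proof -
  have \<alpha>: "\<alpha>x * (12 * (r + Lx + 2 * Ly)) \<le> 1" "2 * Ly \<le> r"
    using step_size_consequences[OF params(1,4) nonneg(4,2,3) alpha_hi] by auto
  have r: "2 * \<rho> \<le> r" "\<rho> < r" using r_ge params(4) nonneg(4) by auto
  have finite_sum: "\<And>ss. s = FiniteSum ss \<Longrightarrow> ss \<noteq> [] \<and> P = measure_pmf (pmf_of_multiset (mset ss))"
    and online: "\<And>B. s = Online B \<Longrightarrow> 1 \<le> B"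
    using setting by auto
  then have finite_sum_space: "\<And>ss. s = FiniteSum ss \<Longrightarrow> space P = UNIV" by auto
  interpret stochastic_algorithm X Y gx gy s T M \<alpha>x \<alpha>y \<beta> r x0 y0 z0 P f \<rho> Lx Ly Omega \<xi> \<sigma>x
    by (intro stochastic_algorithm.intro algorithm.intro weakly_convex_prox.intro stochastic_algorithm_axioms.intro)
      (use X Y meas_gx meas_gy P unbiased_x weakly_convex lip_gx_x lip_gx_y r nonneg Omega samples_indep
        samples_distr var_x init finite_sum finite_sum_space online KTM in simp_all)
  have S_run: "S = run" by (simp add: fun_eq_iff S_def run_def state_def samples_def sample_def)
  show ?thesis
    using average_mean_sq_grad_le[OF params(1) r(1) \<alpha> KTM(1)]
    by (simp add: S_run xk_def yk_def zk_def C\<sigma>x_def C_sigma_def mean_def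
        sq_grad_def sq_dx_def sq_dy_def sq_gap_def)
qed

end
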